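(* Let $0<\lambda<\frac{5-\sqrt{21}}{2}$ and let $K$ be the attractor of the IFS $f_1(x)=\lambda x$, $f_2(x)=\lambda x+2\lambda$, $f_3(x)=\lambda x+3\lambda-\lambda^2$, $f_4(x)=\lambda x+1-\lambda$. Then for every $k\ge1$, $$\dim_H(U_{2^k})=\dim_H(U_1)=\frac{\log(2+\sqrt2)}{-\log\lambda}.$$ Moreover $U_i=\emptyset$ for every positive integer $i$ that is not a power of $2$, and $U_{\aleph_0}=\emptyset$.
   Context: A coding of $x\in K$ is a sequence $(i_n)\in\{1,2,3,4\}^{\mathbb{N}}$ with $x=\lim_{n\to\infty}f_{i_1}\circ\cdots\circ f_{i_n}(0)$. For $k\in\{1,2,\dots\}\cup\{\aleph_0\}$, $U_k$ denotes the set of $x\in K$ having exactly $k$ distinct codings. *)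

theory Defs
  imports "HOL-Analysis.Analysis"
begin

text \<open>Contribution of a covering set to the s-dimensional sum, with the standard
  conventions: the empty set contributes 0 and (for nonempty U) diam(U)^0 = 1.\<close>
definition hcontrib :: "real \<Rightarrow> real set \<Rightarrow> real" where
  "hcontrib s U = (if U = {} then 0 else if s = 0 then 1 else diameter U powr s)"

definition hausdorff_pre :: "real \<Rightarrow> real \<Rightarrow> real set \<Rightarrow> ennreal" where
  "hausdorff_pre s \<delta> E =
     (INF U \<in> {U :: nat \<Rightarrow> real set. E \<subseteq> (\<Union>i. U i) \<and>
                   (\<forall>i. bounded (U i) \<and> diameter (U i) \<le> \<delta>)}.
        (\<Sum>i. ennreal (hcontrib s (U i))))"

definition hausdorff_measure :: "real \<Rightarrow> real set \<Rightarrow> ennreal" where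
  "hausdorff_measure s E = (SUP \<delta> \<in> {0<..}. hausdorff_pre s \<delta> E)"

definition hausdorff_dim :: "real set \<Rightarrow> real" where
  "hausdorff_dim E = Inf {s. 0 \<le> s \<and> hausdorff_measure s E = 0}"

definition fmap :: "real \<Rightarrow> nat \<Rightarrow> real \<Rightarrow> real" where
  "fmap lam i x =
     (if i = 1 then lam * x
      else if i = 2 then lam * x + 2 * lam
      else if i = 3 then lam * x + 3 * lam - lam\<^sup>2
      else lam * x + 1 - lam)"

definition attractor :: "real \<Rightarrow> real set" where
  "attractor lam = (THE K. compact K \<and> K \<noteq> {} \<and> K = (\<Union>i\<in>{1..4}. fmap lam i ` K))"

text \<open>f_{c 0} o ... o f_{c (n-1)} applied to 0 (the paper's i_1 is c 0).\<close>
definition prefix_point :: "real \<Rightarrow> (nat \<Rightarrow> nat) \<Rightarrow> nat \<Rightarrow> real" where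
  "prefix_point lam c n = foldr (\<lambda>j y. fmap lam (c j) y) [0..<n] 0"

definition codings :: "real \<Rightarrow> real \<Rightarrow> (nat \<Rightarrow> nat) set" where
  "codings lam x = {c. (\<forall>n. c n \<in> {1..4}) \<and> prefix_point lam c \<longlonglongrightarrow> x}"

definition Ufin :: "real \<Rightarrow> nat \<Rightarrow> real set" where
  "Ufin lam k = {x \<in> attractor lam. finite (codings lam x) \<and> card (codings lam x) = k}"

definition Ualeph0 :: "real \<Rightarrow> real set" where
  "Ualeph0 lam = {x \<in> attractor lam. countable (codings lam x) \<and> infinite (codings lam x)}"

end

(*
  A coding c represents the point \<Sum>j. \<lambda>^j t(c j), where t i = f i 0. Since
  f\<^sub>3 \<circ> f\<^sub>1 = f\<^sub>2 \<circ> f\<^sub>4, the block 31 may always be replaced by 24; for \<lambda> < (5 - sqrt 21)/2 the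
  first-level images are otherwise far enough apart that this is the only ambiguity. So every
  point has a unique coding u avoiding 31, and its codings arise from u by turning any subset of
  its 24-blocks into 31: there are 2^k of them if u has k such blocks, uncountably many if it
  has infinitely many.

  Thus U\<^sub>1 is the image of the sequences avoiding both 24 and 31, a subshift of finite type
  whose transition matrix has spectral radius 2 + sqrt 2. For these sequences the first-level
  pieces are separated by a fixed gap, so counting admissible words bounds the Hausdorff measure
  from above and below and gives dim U\<^sub>1 = log (2 + sqrt 2) / (- log \<lambda>). Finally U\<^sub>2\<^sup>k contains
  a similar copy of U\<^sub>1 (prefix k blocks 24) and lies in a countable union of similar copies
  (cut after the last 24-block), so it has the same dimension.
*)

theory Submission
  imports Defs
begin

section \<open>Hausdorff measure on the real line\<close>

lemma geometric_halves_sums: "(\<lambda>k. e / 2 ^ Suc k) sums (e::real)"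
proof -
  have "(\<lambda>k. (e/2) * (1/2::real) ^ k) sums ((e/2) * (1 / (1 - 1/2)))"
    by (intro sums_mult geometric_sums) simp
  then show ?thesis by (simp add: power_one_over)
qed

lemma powr_power_real: "0 < (x::real) \<Longrightarrow> (x ^ n) powr s = (x powr s) ^ n"
  by (simp add: powr_realpow[symmetric] powr_powr powr_power mult.commute)

lemma hcontrib_nonneg: "0 \<le> hcontrib s U"
  by (simp add: hcontrib_def)

lemma hausdorff_pre_mono: "A \<subseteq> B \<Longrightarrow> hausdorff_pre s \<delta> A \<le> hausdorff_pre s \<delta> B"
  unfolding hausdorff_pre_def by (rule INF_superset_mono) auto

lemma hausdorff_measure_mono: "A \<subseteq> B \<Longrightarrow> hausdorff_measure s A \<le> hausdorff_measure s B"
  unfolding hausdorff_measure_def by (intro SUP_mono') (rule hausdorff_pre_mono)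

lemma hausdorff_pre_le_measure: "0 < \<delta> \<Longrightarrow> hausdorff_pre s \<delta> A \<le> hausdorff_measure s A"
  unfolding hausdorff_measure_def by (intro SUP_upper) simp

lemma hausdorff_measure_eq_0_iff:
  "hausdorff_measure s A = 0 \<longleftrightarrow> (\<forall>\<delta>>0. hausdorff_pre s \<delta> A = 0)"
proof
  assume "hausdorff_measure s A = 0"
  then show "\<forall>\<delta>>0. hausdorff_pre s \<delta> A = 0"
    using hausdorff_pre_le_measure by (metis le_zero_eq)
next
  assume "\<forall>\<delta>>0. hausdorff_pre s \<delta> A = 0"
  then show "hausdorff_measure s A = 0"
    unfolding hausdorff_measure_def by (simp add: SUP_constant)
qed

lemma hausdorff_pre_le_cover:
  assumes "A \<subseteq> (\<Union>i. U i)" "\<And>i. bounded (U i)" "\<And>i. diameter (U i) \<le> \<delta>"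
  shows "hausdorff_pre s \<delta> A \<le> (\<Sum>i. ennreal (hcontrib s (U i)))"
  unfolding hausdorff_pre_def using assms by (intro INF_lower) blast

lemma hausdorff_measure_empty: "hausdorff_measure s {} = 0"
proof -
  have "hausdorff_pre s \<delta> {} \<le> 0" if "0 < \<delta>" for \<delta>
    using hausdorff_pre_le_cover[of "{}" "\<lambda>_. {}" \<delta> s] that by (simp add: hcontrib_def)
  then show ?thesis by (simp add: hausdorff_measure_eq_0_iff)
qed

lemma hausdorff_pre_0_ge_1:
  assumes "A \<noteq> {}" shows "1 \<le> hausdorff_pre 0 \<delta> A"
  unfolding hausdorff_pre_def
proof (rule INF_greatest)
  fix U :: "nat \<Rightarrow> real set" assume "U \<in> {U. A \<subseteq> (\<Union>i. U i) \<and> (\<forall>i. bounded (U i) \<and> diameter (U i) \<le> \<delta>)}"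
  with assms obtain i where "U i \<noteq> {}" by blast
  then have "ennreal (hcontrib 0 (U i)) = 1" by (simp add: hcontrib_def)
  moreover have "ennreal (hcontrib 0 (U i)) \<le> (\<Sum>i. ennreal (hcontrib 0 (U i)))"
    using sum_le_suminf[of "\<lambda>i. ennreal (hcontrib 0 (U i))" "{i}"] by (simp add: summableI)
  ultimately show "1 \<le> (\<Sum>i. ennreal (hcontrib 0 (U i)))" by simp
qed

lemma hausdorff_pre_le_finite_cover:
  assumes "finite \<F>" "A \<subseteq> \<Union>\<F>" "\<And>V. V \<in> \<F> \<Longrightarrow> bounded V \<and> diameter V \<le> \<delta>" "0 \<le> \<delta>"
  shows "hausdorff_pre s \<delta> A \<le> ennreal (\<Sum>V\<in>\<F>. hcontrib s V)"
proof -
  obtain vs where vs: "set vs = \<F>" "distinct vs" using finite_distinct_list[OF assms(1)] by blast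
  define U where "U i = (if i < length vs then vs ! i else {})" for i
  have "V \<subseteq> (\<Union>i. U i)" if "V \<in> \<F>" for V
  proof -
    have "V \<in> set vs" using that vs(1) by simp
    then obtain i where "i < length vs" "V = vs ! i" unfolding in_set_conv_nth by blast
    then have "U i = V" by (simp add: U_def)
    then show ?thesis by blast
  qed
  then have cover: "A \<subseteq> (\<Union>i. U i)" using assms(2) by blast
  have U: "bounded (U i) \<and> diameter (U i) \<le> \<delta>" for i
  proof (cases "i < length vs")
    case True
    then have "vs ! i \<in> \<F>" using vs(1) nth_mem by blast
    then show ?thesis using True assms(3) by (simp add: U_def)
  qed (simp add: U_def assms(4))
  have "hausdorff_pre s \<delta> A \<le> (\<Sum>i. ennreal (hcontrib s (U i)))"
    using cover U by (intro hausdorff_pre_le_cover) blast+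
  also have "\<dots> = (\<Sum>i<length vs. ennreal (hcontrib s (U i)))"
    by (rule suminf_finite) (simp_all add: U_def hcontrib_def)
  also have "\<dots> = ennreal (\<Sum>i<length vs. hcontrib s (vs ! i))"
    by (simp add: U_def sum_ennreal hcontrib_nonneg)
  also have "(\<Sum>i<length vs. hcontrib s (vs ! i)) = (\<Sum>V\<in>\<F>. hcontrib s V)"
    using sum.distinct_set_conv_list[of vs "hcontrib s"] sum_list_sum_nth[of "map (hcontrib s) vs"] vs
    by (simp add: atLeast0LessThan)
  finally show ?thesis .
qed

lemma bounded_diameter_lipschitz_image:
  fixes h :: "real \<Rightarrow> real"
  assumes lip: "\<And>x y. \<bar>h x - h y\<bar> \<le> K * \<bar>x - y\<bar>" and K: "0 \<le> K" and b: "bounded U"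
  shows "bounded (h ` U)" "diameter (h ` U) \<le> K * diameter U"
proof -
  have d: "\<bar>h x - h y\<bar> \<le> K * diameter U" if "x \<in> U" "y \<in> U" for x y
  proof -
    have "\<bar>x - y\<bar> \<le> diameter U"
      using diameter_bounded_bound[OF b that] by (simp add: dist_real_def)
    then show ?thesis using lip[of x y] K by (meson mult_left_mono order_trans)
  qed
  show "bounded (h ` U)"
  proof (cases "U = {}")
    case False
    then obtain x0 where x0: "x0 \<in> U" by blast
    have "\<bar>h x\<bar> \<le> \<bar>h x0\<bar> + K * diameter U" if "x \<in> U" for x
      using d[OF that x0] by linarith
    then show ?thesis unfolding bounded_real by fast
  qed simp
  show "diameter (h ` U) \<le> K * diameter U"
    using d diameter_ge_0[OF b] K by (intro diameter_le) (auto simp: dist_real_def)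
qed

lemma hausdorff_pre_lipschitz_image_le:
  fixes h :: "real \<Rightarrow> real"
  assumes lip: "\<And>x y. \<bar>h x - h y\<bar> \<le> K * \<bar>x - y\<bar>" and K: "0 < K" and s: "0 \<le> s"
    and U: "A \<subseteq> (\<Union>i. U i)" "\<And>i. bounded (U i)" "\<And>i. diameter (U i) \<le> \<delta>"
  shows "hausdorff_pre s (K * \<delta>) (h ` A) \<le> ennreal (K powr s) * (\<Sum>i. ennreal (hcontrib s (U i)))"
proof -
  note V = bounded_diameter_lipschitz_image[OF lip less_imp_le[OF K] U(2)]
  have "hcontrib s (h ` U i) \<le> K powr s * hcontrib s (U i)" for i
  proof (cases "U i = {} \<or> s = 0")
    case False
    then have "diameter (h ` U i) powr s \<le> (K * diameter (U i)) powr s"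
      using V(2)[of i] diameter_ge_0[OF V(1)[of i]] s by (intro powr_mono2) simp_all
    then show ?thesis
      using False K diameter_ge_0[OF U(2)] by (simp add: hcontrib_def powr_mult)
  qed (use K in \<open>auto simp: hcontrib_def\<close>)
  then have "(\<Sum>i. ennreal (hcontrib s (h ` U i))) \<le> (\<Sum>i. ennreal (K powr s) * ennreal (hcontrib s (U i)))"
    by (intro suminf_le summableI) (simp add: hcontrib_nonneg ennreal_leI flip: ennreal_mult)
  also have "\<dots> = ennreal (K powr s) * (\<Sum>i. ennreal (hcontrib s (U i)))"
    by (rule ennreal_suminf_cmult)
  finally have sum_le: "(\<Sum>i. ennreal (hcontrib s (h ` U i))) \<le> ennreal (K powr s) * (\<Sum>i. ennreal (hcontrib s (U i)))" .
  have "hausdorff_pre s (K * \<delta>) (h ` A) \<le> (\<Sum>i. ennreal (hcontrib s (h ` U i)))"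
  proof (rule hausdorff_pre_le_cover)
    show "h ` A \<subseteq> (\<Union>i. h ` U i)" using U(1) by blast
    show "diameter (h ` U i) \<le> K * \<delta>" for i
      using V(2)[of i] U(3)[of i] K by (meson mult_left_mono order_trans less_imp_le)
  qed (rule V(1))
  then show ?thesis using sum_le by (rule order_trans)
qed

lemma hausdorff_measure_lipschitz_image_zero:
  fixes h :: "real \<Rightarrow> real"
  assumes lip: "\<And>x y. \<bar>h x - h y\<bar> \<le> K * \<bar>x - y\<bar>" and K: "0 < K" and s: "0 \<le> s"
    and A: "hausdorff_measure s A = 0"
  shows "hausdorff_measure s (h ` A) = 0"
  unfolding hausdorff_measure_eq_0_iff
proof (intro allI impI)
  fix \<delta> :: real assume "0 < \<delta>"
  have "hausdorff_pre s \<delta> (h ` A) \<le> 0 + ennreal e" if "0 < e" for e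
  proof -
    have "hausdorff_pre s (\<delta> / K) A < ennreal (e / K powr s)"
      using A \<open>0 < \<delta>\<close> K that by (simp add: hausdorff_measure_eq_0_iff)
    then obtain U where U: "A \<subseteq> (\<Union>i. U i)" "\<And>i. bounded (U i)" "\<And>i. diameter (U i) \<le> \<delta> / K"
      and small: "(\<Sum>i. ennreal (hcontrib s (U i))) < ennreal (e / K powr s)"
      unfolding hausdorff_pre_def INF_less_iff by blast
    have "hausdorff_pre s \<delta> (h ` A) \<le> ennreal (K powr s) * (\<Sum>i. ennreal (hcontrib s (U i)))"
      using hausdorff_pre_lipschitz_image_le[OF lip K s U] K by simp
    also have "\<dots> \<le> ennreal (K powr s) * ennreal (e / K powr s)"
      using small by (intro mult_left_mono) simp_all
    also have "\<dots> = ennreal e"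
      using K \<open>0 < e\<close> by (simp flip: ennreal_mult)
    finally show ?thesis by simp
  qed
  then show "hausdorff_pre s \<delta> (h ` A) = 0"
    using ennreal_le_epsilon by (metis add_0 le_zero_eq)
qed

lemma hausdorff_measure_affine_image_nonzero:
  fixes r :: real
  assumes "0 < r" "0 \<le> s" "hausdorff_measure s A \<noteq> 0"
  shows "hausdorff_measure s ((\<lambda>y. b + r * y) ` A) \<noteq> 0"
proof
  assume zero: "hausdorff_measure s ((\<lambda>y. b + r * y) ` A) = 0"
  have lip: "\<bar>(x - b) / r - (y - b) / r\<bar> \<le> (1 / r) * \<bar>x - y\<bar>" for x y
    using assms(1) by (simp add: abs_divide diff_divide_distrib[symmetric])
  have "hausdorff_measure s ((\<lambda>x. (x - b) / r) ` (\<lambda>y. b + r * y) ` A) = 0"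
    using hausdorff_measure_lipschitz_image_zero[where h = "\<lambda>x. (x - b) / r", OF lip _ assms(2) zero]
      assms(1) by simp
  moreover have "(\<lambda>x. (x - b) / r) ` (\<lambda>y. b + r * y) ` A = A"
    using assms(1) by (force simp: image_image)
  ultimately show False using assms(3) by simp
qed

lemma hausdorff_measure_UN_zero:
  fixes A :: "nat \<Rightarrow> real set"
  assumes A: "\<And>k. hausdorff_measure s (A k) = 0"
  shows "hausdorff_measure s (\<Union>k. A k) = 0"
  unfolding hausdorff_measure_eq_0_iff
proof (intro allI impI)
  fix \<delta> :: real assume "0 < \<delta>"
  have "hausdorff_pre s \<delta> (\<Union>k. A k) \<le> 0 + ennreal e" if "0 < e" for e
  proof -
    have "\<exists>U. (A k \<subseteq> (\<Union>i. U i) \<and> (\<forall>i. bounded (U i) \<and> diameter (U i) \<le> \<delta>))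
              \<and> (\<Sum>i. ennreal (hcontrib s (U i))) < ennreal (e / 2 ^ Suc k)" for k
    proof -
      have "hausdorff_pre s \<delta> (A k) < ennreal (e / 2 ^ Suc k)"
        using A \<open>0 < \<delta>\<close> that by (simp add: hausdorff_measure_eq_0_iff)
      then show ?thesis unfolding hausdorff_pre_def INF_less_iff by blast
    qed
    then obtain U where U: "\<And>k. A k \<subseteq> (\<Union>i. U k i)" "\<And>k i. bounded (U k i) \<and> diameter (U k i) \<le> \<delta>"
      and small: "\<And>k. (\<Sum>i. ennreal (hcontrib s (U k i))) < ennreal (e / 2 ^ Suc k)"
      by metis
    define V where "V n = U (fst (prod_decode n)) (snd (prod_decode n))" for n
    have "(\<Union>k. A k) \<subseteq> (\<Union>n. V n)"
    proof
      fix x assume "x \<in> (\<Union>k. A k)"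
      then obtain k i where "x \<in> U k i" using U(1) by blast
      then show "x \<in> (\<Union>n. V n)" by (metis UN_I UNIV_I V_def fst_conv prod_encode_inverse snd_conv)
    qed
    then have "hausdorff_pre s \<delta> (\<Union>k. A k) \<le> (\<Sum>n. ennreal (hcontrib s (V n)))"
      using U(2) by (intro hausdorff_pre_le_cover) (auto simp: V_def)
    also have "\<dots> = (\<Sum>k. \<Sum>i. ennreal (hcontrib s (U k i)))"
      unfolding V_def
      by (rule suminf_ennreal_2dimen[where f="\<lambda>p. ennreal (hcontrib s (U (fst p) (snd p)))"
          and g="\<lambda>k. \<Sum>i. ennreal (hcontrib s (U k i))", simplified])
    also have "\<dots> \<le> (\<Sum>k. ennreal (e / 2 ^ Suc k))"
      by (intro suminf_le summableI less_imp_le small)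
    also have "\<dots> = ennreal e"
      using \<open>0 < e\<close> geometric_halves_sums[of e] by (simp add: suminf_ennreal2 sums_iff)
    finally show ?thesis by simp
  qed
  then show "hausdorff_pre s \<delta> (\<Union>k. A k) = 0"
    using ennreal_le_epsilon by (metis add_0 le_zero_eq)
qed

lemma hausdorff_measure_countable_UN_zero:
  assumes "countable I" and "\<And>i. i \<in> I \<Longrightarrow> hausdorff_measure s (A i) = 0"
  shows "hausdorff_measure s (\<Union>i\<in>I. A i) = 0"
proof (cases "I = {}")
  case False
  then have "(\<Union>i\<in>I. A i) = (\<Union>n. A (from_nat_into I n))"
    using range_from_nat_into[OF False assms(1)] by (metis image_image)
  then show ?thesis
    using assms(2) from_nat_into[OF False] by (simp add: hausdorff_measure_UN_zero)
qed (simp add: hausdorff_measure_empty)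

lemma hausdorff_dim_eqI:
  assumes "0 \<le> d" and "\<And>s. d < s \<Longrightarrow> hausdorff_measure s X = 0"
    and "\<And>s. 0 \<le> s \<Longrightarrow> s \<le> d \<Longrightarrow> hausdorff_measure s X \<noteq> 0"
  shows "hausdorff_dim X = d"
proof -
  have "{s. 0 \<le> s \<and> hausdorff_measure s X = 0} = {d<..}"
  proof (intro set_eqI iffI)
    fix s assume "s \<in> {s. 0 \<le> s \<and> hausdorff_measure s X = 0}"
    then show "s \<in> {d<..}" using assms(3) by (force simp: not_less)
  qed (use assms(1,2) in auto)
  then show ?thesis unfolding hausdorff_dim_def by simp
qed

section \<open>The coding map and the attractor\<close>

definition digit_seqs :: "(nat \<Rightarrow> nat) set" where
  "digit_seqs = {c. \<forall>n. c n \<in> {1..4}}"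

definition offset :: "real \<Rightarrow> nat \<Rightarrow> real" where
  "offset lam i = fmap lam i 0"

definition coding_point :: "real \<Rightarrow> (nat \<Rightarrow> nat) \<Rightarrow> real" where
  "coding_point lam c = (\<Sum>j. lam ^ j * offset lam (c j))"

definition shift :: "nat \<Rightarrow> (nat \<Rightarrow> nat) \<Rightarrow> nat \<Rightarrow> nat" where
  "shift m c = (\<lambda>n. c (n + m))"

definition scons :: "nat \<Rightarrow> (nat \<Rightarrow> nat) \<Rightarrow> nat \<Rightarrow> nat" where
  "scons a d = (\<lambda>n. if n = 0 then a else d (n - 1))"

lemma fmap_eq_offset: "fmap lam i x = lam * x + offset lam i"
  by (simp add: fmap_def offset_def)

lemma offset_values:
  "offset lam 1 = 0" "offset lam 2 = 2 * lam" "offset lam 3 = 3 * lam - lam\<^sup>2" "offset lam 4 = 1 - lam"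
  by (simp_all add: offset_def fmap_def)

lemma shift_digit_seqs: "c \<in> digit_seqs \<Longrightarrow> shift m c \<in> digit_seqs"
  by (simp add: digit_seqs_def shift_def)

lemma scons_digit_seqs: "a \<in> {1..4} \<Longrightarrow> d \<in> digit_seqs \<Longrightarrow> scons a d \<in> digit_seqs"
  by (auto simp: digit_seqs_def scons_def)

lemma shift_1_scons: "shift 1 (scons a d) = d"
  by (simp add: shift_def scons_def)

lemma foldr_fmap_upt:
  "foldr (\<lambda>j y. fmap lam (c j) y) [m..<m + k] y = (\<Sum>j<k. lam ^ j * offset lam (c (m + j))) + lam ^ k * y"
proof (induction k arbitrary: m)
  case (Suc k)
  have "[m..<m + Suc k] = m # [Suc m..<Suc m + k]" by (simp add: upt_conv_Cons)
  then have "foldr (\<lambda>j y. fmap lam (c j) y) [m..<m + Suc k] y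
      = lam * ((\<Sum>j<k. lam ^ j * offset lam (c (Suc m + j))) + lam ^ k * y) + offset lam (c m)"
    using Suc[of "Suc m"] by (simp add: fmap_eq_offset)
  also have "\<dots> = (\<Sum>j<Suc k. lam ^ j * offset lam (c (m + j))) + lam ^ Suc k * y"
    by (subst sum.lessThan_Suc_shift) (simp add: sum_distrib_left algebra_simps)
  finally show ?case .
qed simp

lemma prefix_point_eq: "prefix_point lam c n = (\<Sum>j<n. lam ^ j * offset lam (c j))"
  using foldr_fmap_upt[of lam c 0 n 0] by (simp add: prefix_point_def)

locale contracting_ifs =
  fixes lam :: real
  assumes lam_pos: "0 < lam" and lam_less_1: "lam < 1"
begin

lemma offset_bounds: "i \<in> {1..4} \<Longrightarrow> 0 \<le> offset lam i \<and> offset lam i \<le> 3"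
proof -
  assume "i \<in> {1..4}"
  have "0 \<le> lam * lam" "lam * lam < lam"
    using lam_pos mult_strict_right_mono[OF lam_less_1 lam_pos] by simp_all
  then have t3: "0 \<le> 3 * lam - lam\<^sup>2" "3 * lam - lam\<^sup>2 \<le> 3"
    using lam_less_1 unfolding power2_eq_square by linarith+
  consider "i = 1" | "i = 2" | "i = 3" | "i = 4" using \<open>i \<in> {1..4}\<close> by force
  then show ?thesis
    using offset_values[of lam] t3 lam_pos lam_less_1 by cases simp_all
qed

lemma summable_coding:
  assumes "c \<in> digit_seqs" shows "summable (\<lambda>j. lam ^ j * offset lam (c j))"
proof (rule summable_comparison_test')
  show "summable (\<lambda>j. lam ^ j * 3)" using lam_pos lam_less_1 by (intro summable_mult2) simp
  show "norm (lam ^ j * offset lam (c j)) \<le> lam ^ j * 3" for j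
    using assms offset_bounds[of "c j"] lam_pos by (simp add: digit_seqs_def abs_mult)
qed

lemma prefix_point_tendsto: "c \<in> digit_seqs \<Longrightarrow> prefix_point lam c \<longlonglongrightarrow> coding_point lam c"
  unfolding coding_point_def prefix_point_eq[abs_def] by (rule summable_LIMSEQ[OF summable_coding])

lemma codings_eq: "codings lam x = {c \<in> digit_seqs. coding_point lam c = x}"
proof -
  have "codings lam x = {c \<in> digit_seqs. prefix_point lam c \<longlonglongrightarrow> x}"
    by (simp add: codings_def digit_seqs_def)
  then show ?thesis using prefix_point_tendsto LIMSEQ_unique by blast
qed

lemma coding_point_shift:
  assumes "c \<in> digit_seqs"
  shows "coding_point lam c = (\<Sum>j<m. lam ^ j * offset lam (c j)) + lam ^ m * coding_point lam (shift m c)"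
proof -
  have "coding_point lam c = (\<Sum>n. lam ^ (n + m) * offset lam (c (n + m))) + (\<Sum>j<m. lam ^ j * offset lam (c j))"
    unfolding coding_point_def by (rule suminf_split_initial_segment[OF summable_coding[OF assms]])
  also have "(\<Sum>n. lam ^ (n + m) * offset lam (c (n + m))) = lam ^ m * coding_point lam (shift m c)"
    unfolding coding_point_def shift_def
    using suminf_mult[OF summable_coding[OF shift_digit_seqs[OF assms, of m]], of "lam ^ m"]
    by (simp add: shift_def power_add algebra_simps)
  finally show ?thesis by simp
qed

lemma coding_point_unfold:
  "c \<in> digit_seqs \<Longrightarrow> coding_point lam c = offset lam (c 0) + lam * coding_point lam (shift 1 c)"
  using coding_point_shift[of c 1] by simp

lemma coding_point_scons:
  "a \<in> {1..4} \<Longrightarrow> d \<in> digit_seqs \<Longrightarrow> coding_point lam (scons a d) = fmap lam a (coding_point lam d)"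
  using coding_point_unfold[OF scons_digit_seqs, of a d] unfolding shift_1_scons
  by (simp add: fmap_eq_offset scons_def)

lemma coding_point_eq_prefix:
  assumes "c \<in> digit_seqs" "d \<in> digit_seqs" "\<forall>j<m. c j = d j"
  shows "coding_point lam c - coding_point lam d
           = lam ^ m * (coding_point lam (shift m c) - coding_point lam (shift m d))"
  using coding_point_shift[OF assms(1), of m] coding_point_shift[OF assms(2), of m] assms(3)
  by (simp add: algebra_simps)

lemma coding_point_nonneg: "c \<in> digit_seqs \<Longrightarrow> 0 \<le> coding_point lam c"
  unfolding coding_point_def using offset_bounds lam_pos
  by (intro suminf_nonneg summable_coding mult_nonneg_nonneg) (auto simp: digit_seqs_def)

lemma coding_point_le: "c \<in> digit_seqs \<Longrightarrow> coding_point lam c \<le> 3 / (1 - lam)"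
proof -
  assume c: "c \<in> digit_seqs"
  have "coding_point lam c \<le> (\<Sum>j. lam ^ j * 3)"
    unfolding coding_point_def using c offset_bounds lam_pos lam_less_1
    by (intro suminf_le summable_coding summable_mult2) (simp_all add: digit_seqs_def mult_left_mono)
  also have "\<dots> = 3 / (1 - lam)"
    using lam_pos lam_less_1 by (simp add: suminf_mult2[symmetric] suminf_geometric)
  finally show ?thesis .
qed

lemma coding_image_self_similar:
  "coding_point lam ` digit_seqs = (\<Union>i\<in>{1..4}. fmap lam i ` coding_point lam ` digit_seqs)"
proof
  show "coding_point lam ` digit_seqs \<subseteq> (\<Union>i\<in>{1..4}. fmap lam i ` coding_point lam ` digit_seqs)"
  proof
    fix x assume "x \<in> coding_point lam ` digit_seqs"
    then obtain c where c: "c \<in> digit_seqs" "x = coding_point lam c" by auto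
    then have "x = fmap lam (c 0) (coding_point lam (shift 1 c))"
      using coding_point_unfold by (simp add: fmap_eq_offset)
    moreover have "c 0 \<in> {1..4}" using c by (simp add: digit_seqs_def)
    ultimately show "x \<in> (\<Union>i\<in>{1..4}. fmap lam i ` coding_point lam ` digit_seqs)"
      using shift_digit_seqs[OF c(1)] by blast
  qed
  show "(\<Union>i\<in>{1..4}. fmap lam i ` coding_point lam ` digit_seqs) \<subseteq> coding_point lam ` digit_seqs"
  proof
    fix x assume "x \<in> (\<Union>i\<in>{1..4}. fmap lam i ` coding_point lam ` digit_seqs)"
    then obtain i d where "i \<in> {1..4}" "d \<in> digit_seqs" "x = fmap lam i (coding_point lam d)"
      by blast
    then show "x \<in> coding_point lam ` digit_seqs"
      using coding_point_scons scons_digit_seqs by (metis image_eqI)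
  qed
qed

lemma bounded_coding_image: "bounded (coding_point lam ` digit_seqs)"
  unfolding bounded_real
proof (intro exI ballI)
  fix x assume "x \<in> coding_point lam ` digit_seqs"
  then obtain c where "c \<in> digit_seqs" "x = coding_point lam c" by blast
  then show "\<bar>x\<bar> \<le> 3 / (1 - lam)" using coding_point_nonneg coding_point_le by simp
qed

text \<open>Following preimages from a point of \<open>K\<close> yields a coding whose partial sums approximate
  the point up to \<open>lam ^ n\<close> times a bounded error.\<close>
lemma subset_coding_image:
  assumes b: "bounded K" and inv: "K \<subseteq> (\<Union>i\<in>{1..4}. fmap lam i ` K)"
  shows "K \<subseteq> coding_point lam ` digit_seqs"
proof
  fix x assume xK: "x \<in> K"
  obtain M where M: "\<forall>y\<in>K. \<bar>y\<bar> \<le> M" using b bounded_real by blast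
  have ex: "\<exists>p. fst p \<in> {1..4} \<and> snd p \<in> K \<and> y = fmap lam (fst p) (snd p)" if "y \<in> K" for y
  proof -
    obtain i z where "i \<in> {1..4}" "z \<in> K" "y = fmap lam i z" using inv \<open>y \<in> K\<close> by blast
    then show ?thesis by (intro exI[of _ "(i, z)"]) simp
  qed
  define pre where "pre y = (SOME p. fst p \<in> {1..4} \<and> snd p \<in> K \<and> y = fmap lam (fst p) (snd p))" for y
  have pre: "fst (pre y) \<in> {1..4} \<and> snd (pre y) \<in> K \<and> y = fmap lam (fst (pre y)) (snd (pre y))"
    if "y \<in> K" for y
    unfolding pre_def using someI_ex[OF ex[OF that]] .
  define ys where "ys = rec_nat x (\<lambda>_ y. snd (pre y))"
  have ys0: "ys 0 = x" and ysS: "ys (Suc n) = snd (pre (ys n))" for n by (simp_all add: ys_def)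
  define c where "c n = fst (pre (ys n))" for n
  have ysK: "ys n \<in> K" for n by (induction n) (use xK pre in \<open>simp_all add: ys0 ysS\<close>)
  have c: "c \<in> digit_seqs" using pre ysK by (simp add: digit_seqs_def c_def)
  have rep: "x = prefix_point lam c n + lam ^ n * ys n" for n
  proof (induction n)
    case (Suc n)
    have "ys n = lam * ys (Suc n) + offset lam (c n)"
      using pre[OF ysK[of n]] by (simp add: ysS c_def fmap_eq_offset)
    then show ?case using Suc by (simp add: prefix_point_eq algebra_simps)
  qed (simp add: ys0 prefix_point_eq)
  have "(\<lambda>n. lam ^ n * ys n) \<longlonglongrightarrow> 0"
  proof (rule Lim_null_comparison)
    show "\<forall>\<^sub>F n in sequentially. norm (lam ^ n * ys n) \<le> M * lam ^ n"
      using M ysK lam_pos by (intro always_eventually allI) (simp add: abs_mult mult.commute mult_left_mono)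
    show "(\<lambda>n. M * lam ^ n) \<longlonglongrightarrow> 0"
      using lam_pos lam_less_1 by (intro tendsto_mult_right_zero LIMSEQ_power_zero) simp
  qed
  then have "(\<lambda>n. x - lam ^ n * ys n) \<longlonglongrightarrow> x" using tendsto_diff[of "\<lambda>_. x" x] by force
  moreover have "(\<lambda>n. x - lam ^ n * ys n) = prefix_point lam c"
    using rep by (simp add: fun_eq_iff algebra_simps)
  ultimately have "coding_point lam c = x" using prefix_point_tendsto[OF c] LIMSEQ_unique by auto
  then show "x \<in> coding_point lam ` digit_seqs" using c by blast
qed

lemma coding_image_subset:
  assumes cl: "closed K" and inv: "\<And>i. i \<in> {1..4} \<Longrightarrow> fmap lam i ` K \<subseteq> K" and y: "y \<in> K"
  shows "coding_point lam ` digit_seqs \<subseteq> K"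
proof
  fix x assume "x \<in> coding_point lam ` digit_seqs"
  then obtain c where c: "c \<in> digit_seqs" "x = coding_point lam c" by auto
  define z where "z c n = prefix_point lam c n + lam ^ n * y" for c n
  have zK: "\<forall>c\<in>digit_seqs. z c n \<in> K" for n
  proof (induction n)
    case (Suc n)
    show ?case
    proof
      fix c assume c: "c \<in> digit_seqs"
      have "z c (Suc n) = fmap lam (c 0) (z (shift 1 c) n)"
        unfolding z_def fmap_eq_offset prefix_point_eq
        by (subst sum.lessThan_Suc_shift) (simp add: shift_def sum_distrib_left algebra_simps)
      moreover have "z (shift 1 c) n \<in> K" using Suc shift_digit_seqs[OF c] by blast
      moreover have "c 0 \<in> {1..4}" using c by (simp add: digit_seqs_def)
      ultimately show "z c (Suc n) \<in> K" using inv by blast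
    qed
  qed (simp add: z_def prefix_point_eq y)
  have "z c \<longlonglongrightarrow> coding_point lam c + 0 * y"
    unfolding z_def using prefix_point_tendsto[OF c(1)] lam_pos lam_less_1
    by (intro tendsto_add tendsto_mult LIMSEQ_power_zero) simp_all
  then show "x \<in> K" using closed_sequentially[OF cl, of "z c"] zK c by auto
qed

lemma attractor_eq: "attractor lam = coding_point lam ` digit_seqs"
  unfolding attractor_def
proof (rule the_equality)
  let ?P = "coding_point lam ` digit_seqs"
  have cont: "continuous_on S (fmap lam i)" for S i
    unfolding fmap_eq_offset[abs_def] by (intro continuous_intros)
  have "compact (\<Union>i\<in>{1..4}. fmap lam i ` closure ?P)"
    using bounded_coding_image cont by (intro compact_UN compact_continuous_image) auto
  moreover have "?P \<subseteq> (\<Union>i\<in>{1..4}. fmap lam i ` closure ?P)"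
    using coding_image_self_similar
    by (rule ord_eq_le_trans) (intro UN_mono image_mono closure_subset order_refl)
  ultimately have "closure ?P \<subseteq> (\<Union>i\<in>{1..4}. fmap lam i ` closure ?P)"
    by (intro closure_minimal compact_imp_closed)
  then have "closure ?P \<subseteq> ?P"
    using bounded_closure[OF bounded_coding_image] by (rule subset_coding_image[rotated])
  then have "compact ?P"
    using bounded_coding_image closure_subset_eq compact_eq_bounded_closed by blast
  moreover have "?P \<noteq> {}"
    using image_is_empty[of "coding_point lam" digit_seqs] by (force simp: digit_seqs_def)
  ultimately show "compact ?P \<and> ?P \<noteq> {} \<and> ?P = (\<Union>i\<in>{1..4}. fmap lam i ` ?P)"
    using coding_image_self_similar by (intro conjI)
  fix K assume "compact K \<and> K \<noteq> {} \<and> K = (\<Union>i\<in>{1..4}. fmap lam i ` K)"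
  then have K: "compact K" "K \<noteq> {}" and KE: "K = (\<Union>i\<in>{1..4}. fmap lam i ` K)" by simp_all
  have inv: "fmap lam i ` K \<subseteq> K" if "i \<in> {1..4}" for i
    using that by (intro ord_le_eq_trans[OF _ KE[symmetric]]) blast
  obtain y where "y \<in> K" using K by blast
  show "K = ?P"
  proof
    show "K \<subseteq> ?P"
      using compact_imp_bounded[OF K(1)] equalityD1[OF KE] by (rule subset_coding_image)
    show "?P \<subseteq> K"
      using compact_imp_closed[OF K(1)] inv \<open>y \<in> K\<close> by (rule coding_image_subset)
  qed
qed

end

section \<open>Normal forms of codings\<close>

definition avoids_31 :: "(nat \<Rightarrow> nat) \<Rightarrow> bool" where
  "avoids_31 u \<longleftrightarrow> (\<forall>n. \<not> (u n = 3 \<and> u (Suc n) = 1))"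

text \<open>Since \<open>f\<^sub>3 \<circ> f\<^sub>1 = f\<^sub>2 \<circ> f\<^sub>4\<close>, replacing every block \<open>31\<close> of a coding by \<open>24\<close> does not
  change the coded point; the result avoids \<open>31\<close>.\<close>
definition normal_form :: "(nat \<Rightarrow> nat) \<Rightarrow> nat \<Rightarrow> nat" where
  "normal_form d n =
     (if d n = 3 \<and> d (Suc n) = 1 then 2
      else if 0 < n \<and> d (n - 1) = 3 \<and> d n = 1 then 4
      else d n)"

definition normal_fibre :: "(nat \<Rightarrow> nat) \<Rightarrow> (nat \<Rightarrow> nat) set" where
  "normal_fibre u = {d \<in> digit_seqs. normal_form d = u}"

definition positions_24 :: "(nat \<Rightarrow> nat) \<Rightarrow> nat set" where
  "positions_24 u = {n. u n = 2 \<and> u (Suc n) = 4}"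

definition positions_31 :: "(nat \<Rightarrow> nat) \<Rightarrow> nat set" where
  "positions_31 d = {n. d n = 3 \<and> d (Suc n) = 1}"

definition insert_31 :: "(nat \<Rightarrow> nat) \<Rightarrow> nat set \<Rightarrow> nat \<Rightarrow> nat" where
  "insert_31 u S = (\<lambda>n. if n \<in> S then 3 else if 0 < n \<and> n - 1 \<in> S then 1 else u n)"

lemma normal_form_digit_seqs: "c \<in> digit_seqs \<Longrightarrow> normal_form c \<in> digit_seqs"
  by (auto simp: digit_seqs_def normal_form_def)

lemma avoids_31_normal_form: "avoids_31 (normal_form c)"
  by (auto simp: avoids_31_def normal_form_def split: if_splits)

lemma avoids_31_shift: "avoids_31 u \<Longrightarrow> avoids_31 (shift m u)"
  by (simp add: avoids_31_def shift_def)

lemma normal_form_id: assumes "avoids_31 u" shows "normal_form u = u"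
proof
  fix n
  have "\<not> (0 < n \<and> u (n - 1) = 3 \<and> u n = 1)"
  proof
    assume n: "0 < n \<and> u (n - 1) = 3 \<and> u n = 1"
    then have "Suc (n - 1) = n" by simp
    then show False using n assms unfolding avoids_31_def by metis
  qed
  then show "normal_form u n = u n" using assms by (simp add: normal_form_def avoids_31_def)
qed

lemma positions_24_no_adjacent: "n \<in> positions_24 u \<Longrightarrow> Suc n \<notin> positions_24 u"
  by (simp add: positions_24_def)

lemma insert_31_digit_seqs: "u \<in> digit_seqs \<Longrightarrow> insert_31 u S \<in> digit_seqs"
  by (auto simp: insert_31_def digit_seqs_def)

lemma positions_31_insert_31:
  assumes "avoids_31 u" "S \<subseteq> positions_24 u"
  shows "positions_31 (insert_31 u S) = S"
proof (intro set_eqI iffI)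
  fix n assume "n \<in> positions_31 (insert_31 u S)"
  then have a: "insert_31 u S n = 3" "insert_31 u S (Suc n) = 1" by (simp_all add: positions_31_def)
  show "n \<in> S"
  proof (rule ccontr)
    assume n: "n \<notin> S"
    then have "Suc n \<notin> S" using a by (auto simp: insert_31_def split: if_splits)
    then have "u n = 3" "u (Suc n) = 1" using a n by (auto simp: insert_31_def split: if_splits)
    then show False using assms(1) unfolding avoids_31_def by blast
  qed
next
  fix n assume "n \<in> S"
  then show "n \<in> positions_31 (insert_31 u S)"
    using assms(2) positions_24_no_adjacent by (fastforce simp: positions_31_def insert_31_def)
qed

lemma normal_form_insert_31:
  assumes "avoids_31 u" "S \<subseteq> positions_24 u"
  shows "normal_form (insert_31 u S) = u"
proof
  fix n
  have P: "insert_31 u S m = 3 \<and> insert_31 u S (Suc m) = 1 \<longleftrightarrow> m \<in> S" for m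
    using positions_31_insert_31[OF assms] by (auto simp: positions_31_def)
  show "normal_form (insert_31 u S) n = u n"
  proof (cases n)
    case 0 then show ?thesis using P[of 0] assms(2) by (auto simp: normal_form_def insert_31_def positions_24_def)
  next
    case (Suc m)
    then have "normal_form (insert_31 u S) n = (if n \<in> S then 2 else if m \<in> S then 4 else insert_31 u S n)"
      using P[of n] P[of m] by (simp add: normal_form_def)
    then show ?thesis using assms(2) Suc by (auto simp: insert_31_def positions_24_def)
  qed
qed

lemma insert_31_positions_31:
  assumes "d \<in> normal_fibre u" shows "insert_31 u (positions_31 d) = d"
proof
  fix n
  have "normal_form d n = u n" using assms by (simp add: normal_fibre_def)
  then show "insert_31 u (positions_31 d) n = d n"
    by (cases n) (auto simp: insert_31_def positions_31_def normal_form_def split: if_splits)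
qed

lemma positions_31_subset:
  assumes "d \<in> normal_fibre u" shows "positions_31 d \<subseteq> positions_24 u"
proof
  fix n assume "n \<in> positions_31 d"
  moreover have "normal_form d n = u n" "normal_form d (Suc n) = u (Suc n)"
    using assms by (simp_all add: normal_fibre_def)
  ultimately show "n \<in> positions_24 u"
    by (simp add: positions_31_def positions_24_def normal_form_def)
qed

lemma bij_betw_positions_31:
  assumes "u \<in> digit_seqs" "avoids_31 u"
  shows "bij_betw positions_31 (normal_fibre u) (Pow (positions_24 u))"
proof (rule bij_betw_byWitness[where f' = "insert_31 u"])
  show "\<forall>d\<in>normal_fibre u. insert_31 u (positions_31 d) = d"
    using insert_31_positions_31 by blast
  show "\<forall>S\<in>Pow (positions_24 u). positions_31 (insert_31 u S) = S"
    using positions_31_insert_31[OF assms(2)] by blast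
  show "positions_31 ` normal_fibre u \<subseteq> Pow (positions_24 u)"
    using positions_31_subset by blast
  show "insert_31 u ` Pow (positions_24 u) \<subseteq> normal_fibre u"
    using normal_form_insert_31[OF assms(2)] insert_31_digit_seqs[OF assms(1)]
    by (auto simp: normal_fibre_def)
qed

lemma uncountable_Pow_infinite:
  fixes P :: "nat set" assumes "infinite P" shows "\<not> countable (Pow P)"
proof
  assume "countable (Pow P)"
  then have rg: "range (from_nat_into (Pow P)) = Pow P" by (intro range_from_nat_into) auto
  define e where "e = enumerate P"
  have eP: "e n \<in> P" for n unfolding e_def by (rule enumerate_in_set[OF assms])
  have "inj e" unfolding e_def using strict_mono_enumerate[OF assms] strict_mono_imp_inj_on by blast
  define T where "T = {e n |n. e n \<notin> from_nat_into (Pow P) n}"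
  have "T \<in> Pow P" using eP by (auto simp: T_def)
  then obtain m where m: "T = from_nat_into (Pow P) m" using rg by (metis imageE)
  have "e m \<in> T \<longleftrightarrow> e m \<notin> from_nat_into (Pow P) m" unfolding T_def using \<open>inj e\<close> by (auto dest: injD)
  then show False using m by blast
qed

lemma normal_fibre_card:
  assumes "u \<in> digit_seqs" "avoids_31 u" "finite (positions_24 u)"
  shows "finite (normal_fibre u) \<and> card (normal_fibre u) = 2 ^ card (positions_24 u)"
  using bij_betw_finite[OF bij_betw_positions_31[OF assms(1,2)]]
    bij_betw_same_card[OF bij_betw_positions_31[OF assms(1,2)]] assms(3)
  by (simp add: card_Pow)

lemma normal_fibre_uncountable:
  assumes "u \<in> digit_seqs" "avoids_31 u" "infinite (positions_24 u)"
  shows "\<not> countable (normal_fibre u)"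
  using bij_betw_imp_surj_on[OF bij_betw_positions_31[OF assms(1,2)]] uncountable_Pow_infinite[OF assms(3)]
  by (metis countable_image)

lemma sum_normal_form_diff:
  "(\<Sum>j<n. lam ^ j * (offset lam (normal_form d j) - offset lam (d j)))
    = (if 0 < n \<and> d (n - 1) = 3 \<and> d n = 1 then lam ^ (n - 1) * (offset lam 2 - offset lam 3) else 0)"
proof (induction n)
  case (Suc n)
  have key: "lam ^ m * (offset lam 2 - offset lam 3) + lam ^ Suc m * (offset lam 4 - offset lam 1) = 0" for m
    by (simp add: offset_def fmap_def algebra_simps power2_eq_square)
  show ?case
  proof (cases "d n = 3 \<and> d (Suc n) = 1")
    case True
    then show ?thesis using Suc.IH by (simp add: normal_form_def)
  next
    case no_31: False
    show ?thesis
    proof (cases "0 < n \<and> d (n - 1) = 3 \<and> d n = 1")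
      case True
      then have "n = Suc (n - 1)" by simp
      then show ?thesis
        using Suc.IH True no_31 key[of "n - 1"] by (simp add: normal_form_def del: power_Suc)
    next
      case False
      then show ?thesis using Suc.IH no_31 by (auto simp: normal_form_def)
    qed
  qed
qed simp

lemma (in contracting_ifs) coding_point_normal_form:
  assumes c: "c \<in> digit_seqs" shows "coding_point lam (normal_form c) = coding_point lam c"
proof -
  let ?f = "\<lambda>j. lam ^ j * (offset lam (normal_form c j) - offset lam (c j))"
  define K where "K = \<bar>offset lam 2 - offset lam 3\<bar>"
  have "(\<lambda>n. \<Sum>j<n. ?f j) \<longlonglongrightarrow> 0"
  proof (rule Lim_null_comparison)
    show "\<forall>\<^sub>F n in sequentially. norm (\<Sum>j<n. ?f j) \<le> K / lam * lam ^ n"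
    proof (rule eventually_sequentiallyI[of 1])
      fix n :: nat assume "1 \<le> n"
      then have "K / lam * lam ^ n = K * lam ^ (n - 1)"
        using lam_pos by (simp add: power_eq_if)
      moreover have "norm (\<Sum>j<n. ?f j) \<le> K * lam ^ (n - 1)"
        unfolding sum_normal_form_diff K_def using lam_pos by (simp add: abs_mult)
      ultimately show "norm (\<Sum>j<n. ?f j) \<le> K / lam * lam ^ n" by simp
    qed
    show "(\<lambda>n. K / lam * lam ^ n) \<longlonglongrightarrow> 0"
      using lam_pos lam_less_1 by (intro tendsto_mult_right_zero LIMSEQ_power_zero) simp
  qed
  then have "?f sums 0" by (simp add: sums_def)
  moreover have "?f sums (coding_point lam (normal_form c) - coding_point lam c)"
    unfolding coding_point_def right_diff_distrib
    using summable_coding[OF normal_form_digit_seqs[OF c]] summable_coding[OF c]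
    by (intro sums_diff summable_sums)
  ultimately show ?thesis using sums_unique2 by force
qed

section \<open>Counting the codings of a point\<close>

lemma small_ratio_less: "(5 - sqrt 21) / 2 < (21 / 100 :: real)"
proof -
  have "(458/100::real) < sqrt 21" by (rule real_less_rsqrt) (simp add: power2_eq_square)
  then show ?thesis by simp
qed

locale small_ratio_ifs = contracting_ifs +
  assumes lam_small: "lam < (5 - sqrt 21) / 2"
begin

lemma lam_less_21_100: "lam < 21 / 100"
  using lam_small small_ratio_less by linarith

text \<open>\<open>(5 - sqrt 21) / 2\<close> is the smaller root of \<open>1 - 5 x + x\<^sup>2\<close>.\<close>
lemma quadratic_lam_pos: "0 < 1 - 5 * lam + lam * lam"
proof -
  have "(5 + sqrt 21) / 2 \<ge> (5 / 2 :: real)" by simp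
  then have "lam - (5 - sqrt 21) / 2 < 0" "lam - (5 + sqrt 21) / 2 < 0"
    using lam_small lam_less_21_100 by linarith+
  moreover have "1 - 5 * lam + lam * lam = (lam - (5 - sqrt 21) / 2) * (lam - (5 + sqrt 21) / 2)"
    by (simp add: field_simps)
  ultimately show ?thesis by (simp add: mult_neg_neg)
qed

lemma lam_square_bounds: "0 < lam * lam" "lam * lam \<le> 21 / 100 * lam"
  using lam_pos lam_less_21_100 by (simp_all add: mult_right_mono)

lemma offset_values_mult:
  "offset lam 1 = 0" "offset lam 2 = 2 * lam" "offset lam 3 = 3 * lam - lam * lam" "offset lam 4 = 1 - lam"
  using offset_values[of lam] by (simp_all add: power2_eq_square)

lemma offset_le: "i \<in> {1..4} \<Longrightarrow> offset lam i \<le> 1 - lam"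
proof -
  assume "i \<in> {1..4}"
  then consider "i = 1" | "i = 2" | "i = 3" | "i = 4" by force
  then show ?thesis using offset_values_mult lam_less_21_100 lam_square_bounds by cases simp_all
qed

lemma coding_point_le_1: "c \<in> digit_seqs \<Longrightarrow> coding_point lam c \<le> 1"
proof -
  assume c: "c \<in> digit_seqs"
  have "coding_point lam c \<le> (\<Sum>j. lam ^ j * (1 - lam))"
    unfolding coding_point_def using c offset_le lam_pos lam_less_1
    by (intro suminf_le summable_coding summable_mult2) (simp_all add: digit_seqs_def mult_left_mono)
  also have "\<dots> = 1"
    using lam_pos lam_less_1 by (simp add: suminf_mult2[symmetric] suminf_geometric)
  finally show ?thesis .
qed

lemma coding_point_diff_le:
  assumes "c \<in> digit_seqs" "d \<in> digit_seqs" "\<forall>j<n. c j = d j"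
  shows "\<bar>coding_point lam c - coding_point lam d\<bar> \<le> lam ^ n"
proof -
  have "\<bar>coding_point lam (shift n c) - coding_point lam (shift n d)\<bar> \<le> 1"
    using assms(1,2) coding_point_le_1 coding_point_nonneg shift_digit_seqs by (smt (verit))
  then show ?thesis
    using coding_point_eq_prefix[OF assms] lam_pos
    by (simp add: abs_mult mult_left_le)
qed

lemma coding_point_first_digit:
  assumes "c \<in> digit_seqs"
  shows "offset lam (c 0) \<le> coding_point lam c" "coding_point lam c \<le> offset lam (c 0) + lam"
  using coding_point_unfold[OF assms] coding_point_nonneg coding_point_le_1
    shift_digit_seqs[OF assms, of 1] lam_pos
  by (auto simp: mult_le_cancel_left1)

lemma coding_point_cases:
  assumes c: "c \<in> digit_seqs"
  shows "(c 0 = 1 \<and> coding_point lam c \<le> lam)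
       \<or> (c 0 = 2 \<and> 2 * lam \<le> coding_point lam c \<and> coding_point lam c \<le> 3 * lam)
       \<or> (c 0 = 3 \<and> 3 * lam - lam * lam \<le> coding_point lam c \<and> coding_point lam c \<le> 4 * lam - lam * lam)
       \<or> (c 0 = 4 \<and> 1 - lam \<le> coding_point lam c)"
proof -
  have "c 0 \<in> {1..4}" using c by (simp add: digit_seqs_def)
  then consider "c 0 = 1" | "c 0 = 2" | "c 0 = 3" | "c 0 = 4" by force
  then show ?thesis using coding_point_first_digit[OF c] offset_values_mult by cases simp_all
qed

lemma coding_point_3_gt:
  assumes c: "c \<in> digit_seqs" "avoids_31 c" "c 0 = 3" shows "3 * lam < coding_point lam c"
proof -
  have "c 1 \<noteq> 1" using c by (simp add: avoids_31_def)
  then have "2 * lam \<le> coding_point lam (shift 1 c)"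
    using coding_point_cases[OF shift_digit_seqs[OF c(1)], of 1] lam_square_bounds lam_less_21_100
    by (auto simp: shift_def)
  then have "lam * (2 * lam) \<le> lam * coding_point lam (shift 1 c)"
    using lam_pos by (simp add: mult_left_mono)
  then show ?thesis using coding_point_unfold[OF c(1)] c(3) offset_values_mult lam_square_bounds by simp
qed

text \<open>The first-digit ranges are disjoint except for digits \<open>2\<close> and \<open>3\<close>; avoiding \<open>31\<close>
  pushes points with first digit \<open>3\<close> above \<open>3 lam\<close>.\<close>
lemma coding_point_eq_first_digit:
  assumes u: "u \<in> digit_seqs" "avoids_31 u" and v: "v \<in> digit_seqs" "avoids_31 v"
    and eq: "coding_point lam u = coding_point lam v"
  shows "u 0 = v 0"
proof (rule ccontr)
  assume "u 0 \<noteq> v 0"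
  moreover have "u 0 = 3 \<Longrightarrow> 3 * lam < coding_point lam u" "v 0 = 3 \<Longrightarrow> 3 * lam < coding_point lam v"
    using coding_point_3_gt u v by auto
  ultimately show False
    using coding_point_cases[OF u(1)] coding_point_cases[OF v(1)] eq lam_square_bounds quadratic_lam_pos lam_less_21_100
    by (elim disjE conjE; linarith)
qed

lemma coding_point_inj_avoids_31:
  assumes "u \<in> digit_seqs" "avoids_31 u" "v \<in> digit_seqs" "avoids_31 v"
    and "coding_point lam u = coding_point lam v"
  shows "u = v"
proof
  fix n show "u n = v n" using assms
  proof (induction n arbitrary: u v)
    case 0 then show ?case using coding_point_eq_first_digit by blast
  next
    case (Suc n)
    have "u 0 = v 0" using coding_point_eq_first_digit Suc.prems by blast
    moreover have "offset lam (u 0) + lam * coding_point lam (shift 1 u)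
        = offset lam (v 0) + lam * coding_point lam (shift 1 v)"
      using coding_point_unfold Suc.prems by simp
    ultimately have "coding_point lam (shift 1 u) = coding_point lam (shift 1 v)"
      using lam_pos by simp
    then have "shift 1 u n = shift 1 v n"
      using Suc.IH[of "shift 1 u" "shift 1 v"] Suc.prems shift_digit_seqs avoids_31_shift by blast
    then show ?case by (simp add: shift_def)
  qed
qed

lemma codings_coding_point:
  assumes c: "c \<in> digit_seqs"
  shows "codings lam (coding_point lam c) = normal_fibre (normal_form c)"
proof -
  have "coding_point lam d = coding_point lam c \<longleftrightarrow> normal_form d = normal_form c" if d: "d \<in> digit_seqs" for d
  proof
    assume "coding_point lam d = coding_point lam c"
    then have "coding_point lam (normal_form d) = coding_point lam (normal_form c)"
      using coding_point_normal_form c d by simp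
    then show "normal_form d = normal_form c"
      using coding_point_inj_avoids_31 normal_form_digit_seqs avoids_31_normal_form c d by blast
  next
    assume "normal_form d = normal_form c"
    then show "coding_point lam d = coding_point lam c"
      using coding_point_normal_form[OF c] coding_point_normal_form[OF d] by simp
  qed
  then show ?thesis unfolding codings_eq normal_fibre_def by blast
qed

lemma Ufin_eq:
  "Ufin lam k = {coding_point lam u |u. u \<in> digit_seqs \<and> avoids_31 u
      \<and> finite (positions_24 u) \<and> k = 2 ^ card (positions_24 u)}"
proof (intro set_eqI iffI)
  fix x assume "x \<in> Ufin lam k"
  then obtain c where c: "c \<in> digit_seqs" "x = coding_point lam c"
    and fin: "finite (normal_fibre (normal_form c))" and card: "card (normal_fibre (normal_form c)) = k"
    unfolding Ufin_def attractor_eq using codings_coding_point by auto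
  note u = normal_form_digit_seqs[OF c(1)] avoids_31_normal_form
  have "finite (positions_24 (normal_form c))"
    using normal_fibre_uncountable[OF u] fin countable_finite by blast
  moreover have "x = coding_point lam (normal_form c)" using c coding_point_normal_form by simp
  ultimately show "x \<in> {coding_point lam u |u. u \<in> digit_seqs \<and> avoids_31 u
      \<and> finite (positions_24 u) \<and> k = 2 ^ card (positions_24 u)}"
    using normal_fibre_card[OF u] card u by auto
next
  fix x assume "x \<in> {coding_point lam u |u. u \<in> digit_seqs \<and> avoids_31 u
      \<and> finite (positions_24 u) \<and> k = 2 ^ card (positions_24 u)}"
  then obtain u where u: "u \<in> digit_seqs" "avoids_31 u" "finite (positions_24 u)"
    and x: "x = coding_point lam u" and k: "k = 2 ^ card (positions_24 u)"
    by blast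
  have "codings lam x = normal_fibre u"
    using codings_coding_point[OF u(1)] normal_form_id[OF u(2)] x by simp
  then show "x \<in> Ufin lam k"
    using normal_fibre_card[OF u] u(1) x k by (auto simp: Ufin_def attractor_eq)
qed

lemma Ufin_empty: "\<not> (\<exists>k. i = 2 ^ k) \<Longrightarrow> Ufin lam i = {}"
  unfolding Ufin_eq by blast

lemma Ualeph0_empty: "Ualeph0 lam = {}"
proof -
  have False if x: "x \<in> Ualeph0 lam" for x
  proof -
    obtain c where "c \<in> digit_seqs" "x = coding_point lam c"
      "countable (codings lam x)" "infinite (codings lam x)"
      using x unfolding Ualeph0_def attractor_eq by blast
    then have c: "c \<in> digit_seqs" "countable (normal_fibre (normal_form c))"
      "infinite (normal_fibre (normal_form c))"
      using codings_coding_point by auto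
    note u = normal_form_digit_seqs[OF c(1)] avoids_31_normal_form
    show False
    proof (cases "finite (positions_24 (normal_form c))")
      case True then show False using normal_fibre_card[OF u] c(3) by blast
    next
      case False then show False using normal_fibre_uncountable[OF u] c(2) by blast
    qed
  qed
  then show ?thesis by blast
qed

end

section \<open>The subshift avoiding 24 and 31\<close>

definition admissible_pair :: "nat \<Rightarrow> nat \<Rightarrow> bool" where
  "admissible_pair a b \<longleftrightarrow> \<not> (a = 2 \<and> b = 4) \<and> \<not> (a = 3 \<and> b = 1)"

fun admissible_word :: "nat list \<Rightarrow> bool" where
  "admissible_word [] = True"
| "admissible_word [a] = (a \<in> {1..4})"
| "admissible_word (a # b # ws) = (a \<in> {1..4} \<and> admissible_pair a b \<and> admissible_word (b # ws))"

definition admissible_words :: "nat \<Rightarrow> nat list set" where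
  "admissible_words n = {ws. length ws = n \<and> admissible_word ws}"

definition follower_words :: "nat \<Rightarrow> nat \<Rightarrow> nat list set" where
  "follower_words a m = {ws. length ws = m \<and> admissible_word (a # ws)}"

definition perron_root :: real where
  "perron_root = 2 + sqrt 2"

text \<open>A positive eigenvector, for the eigenvalue \<open>perron_root\<close>, of the \<open>4 \<times> 4\<close>
  transition matrix of admissible pairs.\<close>
definition perron_vec :: "nat \<Rightarrow> real" where
  "perron_vec a = (if a = 1 \<or> a = 4 then sqrt 2 else 1)"

lemma admissible_word_set: "admissible_word ws \<Longrightarrow> set ws \<subseteq> {1..4}"
  by (induction ws rule: admissible_word.induct) auto

lemma admissible_word_append:
  "u \<noteq> [] \<Longrightarrow> admissible_word (u @ z) \<longleftrightarrow> admissible_word u \<and> admissible_word (last u # z)"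
proof (induction u rule: admissible_word.induct)
  case (2 a) then show ?case by (cases z) auto
qed auto

lemma admissible_word_nth:
  "admissible_word ws \<Longrightarrow> Suc n < length ws \<Longrightarrow> admissible_pair (ws ! n) (ws ! Suc n)"
proof (induction ws arbitrary: n rule: admissible_word.induct)
  case (3 a b ws) then show ?case by (cases n) auto
qed auto

lemma finite_follower_words: "finite (follower_words a m)"
proof (rule finite_subset)
  show "follower_words a m \<subseteq> {xs. set xs \<subseteq> {1..4} \<and> length xs = m}"
    using admissible_word_set by (fastforce simp: follower_words_def)
  show "finite {xs. set xs \<subseteq> {1..4::nat} \<and> length xs = m}"
    by (rule finite_lists_length_eq) simp
qed

lemma follower_words_0: "a \<in> {1..4} \<Longrightarrow> follower_words a 0 = {[]}"
  by (auto simp: follower_words_def)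

lemma follower_words_Suc:
  assumes "a \<in> {1..4}"
  shows "follower_words a (Suc m) = (\<Union>b\<in>{b\<in>{1..4}. admissible_pair a b}. (#) b ` follower_words b m)"
proof
  show "follower_words a (Suc m) \<subseteq> (\<Union>b\<in>{b\<in>{1..4}. admissible_pair a b}. (#) b ` follower_words b m)"
  proof
    fix ws assume "ws \<in> follower_words a (Suc m)"
    then obtain b zs where ws: "ws = b # zs" "length zs = m" "admissible_word (a # b # zs)"
      by (cases ws) (auto simp: follower_words_def)
    then have "b \<in> {1..4}" by (cases zs) auto
    then show "ws \<in> (\<Union>b\<in>{b\<in>{1..4}. admissible_pair a b}. (#) b ` follower_words b m)"
      using ws by (auto simp: follower_words_def)
  qed
  show "(\<Union>b\<in>{b\<in>{1..4}. admissible_pair a b}. (#) b ` follower_words b m) \<subseteq> follower_words a (Suc m)"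
    using assms by (auto simp: follower_words_def)
qed

lemma card_follower_words_Suc:
  assumes "a \<in> {1..4}"
  shows "card (follower_words a (Suc m)) = (\<Sum>b\<in>{b\<in>{1..4}. admissible_pair a b}. card (follower_words b m))"
proof -
  have "card (follower_words a (Suc m))
      = (\<Sum>b\<in>{b\<in>{1..4}. admissible_pair a b}. card ((#) b ` follower_words b m))"
    unfolding follower_words_Suc[OF assms] using finite_follower_words
    by (intro card_UN_disjoint) auto
  also have "\<dots> = (\<Sum>b\<in>{b\<in>{1..4}. admissible_pair a b}. card (follower_words b m))"
    by (intro sum.cong refl card_image) simp
  finally show ?thesis .
qed

lemma perron_root_gt_3: "3 < perron_root"
proof -
  have "1 < sqrt (2::real)" by simp
  then show ?thesis by (simp add: perron_root_def)
qed

lemma perron_vec_eigen: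
  assumes "a \<in> {1..4}"
  shows "(\<Sum>b\<in>{b\<in>{1..4}. admissible_pair a b}. perron_vec b) = perron_root * perron_vec a"
proof -
  have "{b\<in>{1..4}. admissible_pair 1 b} = {1, 2, 3, 4}" "{b\<in>{1..4}. admissible_pair 4 b} = {1, 2, 3, 4}"
       "{b\<in>{1..4}. admissible_pair 2 b} = {1, 2, 3}" "{b\<in>{1..4}. admissible_pair 3 b} = {2, 3, 4}"
    by (auto simp: admissible_pair_def)
  moreover have "a = 1 \<or> a = 2 \<or> a = 3 \<or> a = 4" using assms by auto
  moreover have "sqrt 2 * sqrt 2 = (2::real)" by simp
  ultimately show ?thesis by (auto simp: perron_vec_def perron_root_def algebra_simps)
qed

lemma perron_vec_bounds: "1 \<le> perron_vec a" "perron_vec a \<le> sqrt 2"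
  by (auto simp: perron_vec_def)

lemma card_follower_words_le:
  "a \<in> {1..4} \<Longrightarrow> real (card (follower_words a m)) \<le> perron_vec a * perron_root ^ m"
proof (induction m arbitrary: a)
  case 0 then show ?case using perron_vec_bounds by (simp add: follower_words_0)
next
  case (Suc m)
  have "real (card (follower_words a (Suc m)))
      = (\<Sum>b\<in>{b\<in>{1..4}. admissible_pair a b}. real (card (follower_words b m)))"
    using card_follower_words_Suc[OF Suc.prems] by simp
  also have "\<dots> \<le> (\<Sum>b\<in>{b\<in>{1..4}. admissible_pair a b}. perron_vec b * perron_root ^ m)"
    using Suc.IH by (intro sum_mono) auto
  also have "\<dots> = perron_vec a * perron_root ^ Suc m"
    using perron_vec_eigen[OF Suc.prems] by (simp add: sum_distrib_right[symmetric])
  finally show ?case .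
qed

lemma card_follower_words_ge:
  "a \<in> {1..4} \<Longrightarrow> perron_vec a * perron_root ^ m / sqrt 2 \<le> real (card (follower_words a m))"
proof (induction m arbitrary: a)
  case 0 then show ?case using perron_vec_bounds[of a] by (simp add: follower_words_0)
next
  case (Suc m)
  have "perron_vec a * perron_root ^ Suc m / sqrt 2
      = perron_root ^ m / sqrt 2 * (\<Sum>b\<in>{b\<in>{1..4}. admissible_pair a b}. perron_vec b)"
    using perron_vec_eigen[OF Suc.prems] by simp
  also have "\<dots> = (\<Sum>b\<in>{b\<in>{1..4}. admissible_pair a b}. perron_vec b * perron_root ^ m / sqrt 2)"
    by (simp add: sum_distrib_left sum_divide_distrib mult.commute)
  also have "\<dots> \<le> (\<Sum>b\<in>{b\<in>{1..4}. admissible_pair a b}. real (card (follower_words b m)))"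
    using Suc.IH by (intro sum_mono) auto
  also have "\<dots> = real (card (follower_words a (Suc m)))"
    using card_follower_words_Suc[OF Suc.prems] by simp
  finally show ?case .
qed

lemma card_follower_words_le_uniform:
  "a \<in> {1..4} \<Longrightarrow> real (card (follower_words a m)) \<le> sqrt 2 * perron_root ^ m"
proof -
  assume "a \<in> {1..4}"
  moreover have "perron_vec a * perron_root ^ m \<le> sqrt 2 * perron_root ^ m"
    using perron_root_gt_3 by (intro mult_right_mono perron_vec_bounds) simp
  ultimately show ?thesis using card_follower_words_le[of a m] by linarith
qed

lemma card_follower_words_ge_uniform:
  "a \<in> {1..4} \<Longrightarrow> perron_root ^ m / sqrt 2 \<le> real (card (follower_words a m))"
proof -
  assume a: "a \<in> {1..4}"
  have "perron_root ^ m / sqrt 2 \<le> perron_vec a * perron_root ^ m / sqrt 2"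
    using perron_vec_bounds[of a] perron_root_gt_3
    by (intro divide_right_mono) (simp_all add: mult_le_cancel_right1)
  then show ?thesis using card_follower_words_ge[OF a, of m] by linarith
qed

lemma admissible_words_Suc: "admissible_words (Suc m) = (\<Union>a\<in>{1..4}. (#) a ` follower_words a m)"
proof
  show "admissible_words (Suc m) \<subseteq> (\<Union>a\<in>{1..4}. (#) a ` follower_words a m)"
  proof
    fix ws assume "ws \<in> admissible_words (Suc m)"
    then obtain a zs where ws: "ws = a # zs" "length zs = m" "admissible_word (a # zs)"
      by (cases ws) (auto simp: admissible_words_def)
    then have "a \<in> {1..4}" by (cases zs) auto
    then show "ws \<in> (\<Union>a\<in>{1..4}. (#) a ` follower_words a m)"
      using ws by (auto simp: follower_words_def)
  qed
  show "(\<Union>a\<in>{1..4}. (#) a ` follower_words a m) \<subseteq> admissible_words (Suc m)"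
    by (auto simp: follower_words_def admissible_words_def)
qed

lemma finite_admissible_words: "finite (admissible_words n)"
  by (cases n) (simp add: admissible_words_def, simp add: admissible_words_Suc finite_follower_words)

lemma card_admissible_words_le:
  "real (card (admissible_words (Suc m))) \<le> 4 * sqrt 2 * perron_root ^ m"
proof -
  have "card (admissible_words (Suc m)) \<le> (\<Sum>a\<in>{1..4}. card ((#) a ` follower_words a m))"
    unfolding admissible_words_Suc by (rule card_UN_le) simp
  also have "\<dots> = (\<Sum>a\<in>{1..4::nat}. card (follower_words a m))"
    by (intro sum.cong refl card_image) simp
  finally have "real (card (admissible_words (Suc m))) \<le> (\<Sum>a\<in>{1..4::nat}. real (card (follower_words a m)))"
    by (metis of_nat_le_iff of_nat_sum)
  also have "\<dots> \<le> (\<Sum>a\<in>{1..4::nat}. sqrt 2 * perron_root ^ m)"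
    by (intro sum_mono card_follower_words_le_uniform) simp
  finally show ?thesis by simp
qed

lemma card_admissible_words_ge:
  "perron_root ^ m / sqrt 2 \<le> real (card (admissible_words (Suc m)))"
proof -
  have "(#) 1 ` follower_words 1 m \<subseteq> admissible_words (Suc m)"
    unfolding admissible_words_Suc by (rule UN_upper) simp
  then have "card ((#) 1 ` follower_words 1 m) \<le> card (admissible_words (Suc m))"
    using finite_admissible_words by (intro card_mono)
  moreover have "card ((#) 1 ` follower_words 1 m) = card (follower_words 1 m)"
    by (rule card_image) simp
  ultimately have "card (follower_words 1 m) \<le> card (admissible_words (Suc m))" by simp
  then show ?thesis using card_follower_words_ge_uniform[of 1 m] by simp
qed

lemma card_admissible_words_prefix_le:
  assumes u: "admissible_word u" "length u = n" "1 \<le> n" and "n \<le> N"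
  shows "real (card {w \<in> admissible_words N. take n w = u}) \<le> sqrt 2 * perron_root ^ (N - n)"
proof -
  have ne: "u \<noteq> []" using u by auto
  have lu: "last u \<in> {1..4}" using admissible_word_set[OF u(1)] last_in_set[OF ne] by blast
  have "{w \<in> admissible_words N. take n w = u} \<subseteq> (@) u ` follower_words (last u) (N - n)"
  proof
    fix w assume w: "w \<in> {w \<in> admissible_words N. take n w = u}"
    then have "w = u @ drop n w" by (metis (mono_tags, lifting) append_take_drop_id mem_Collect_eq)
    moreover have "drop n w \<in> follower_words (last u) (N - n)"
      using w admissible_word_append[OF ne, of "drop n w"] calculation
      by (auto simp: admissible_words_def follower_words_def)
    ultimately show "w \<in> (@) u ` follower_words (last u) (N - n)" by blast
  qed
  then have "card {w \<in> admissible_words N. take n w = u} \<le> card ((@) u ` follower_words (last u) (N - n))"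
    using finite_follower_words by (intro card_mono) auto
  also have "\<dots> \<le> card (follower_words (last u) (N - n))"
    by (rule card_image_le[OF finite_follower_words])
  finally show ?thesis using card_follower_words_le_uniform[OF lu, of "N - n"] by linarith
qed

definition admissible_seqs :: "(nat \<Rightarrow> nat) set" where
  "admissible_seqs = {c \<in> digit_seqs. \<forall>n. admissible_pair (c n) (c (Suc n))}"

definition cylinder :: "(nat \<Rightarrow> nat) \<Rightarrow> nat \<Rightarrow> (nat \<Rightarrow> nat) set" where
  "cylinder c n = {d. \<forall>j<n. d j = c j}"

definition seq_prefix :: "nat \<Rightarrow> (nat \<Rightarrow> nat) \<Rightarrow> nat list" where
  "seq_prefix n c = map c [0..<n]"

definition extend_word :: "nat list \<Rightarrow> nat \<Rightarrow> nat" where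
  "extend_word ws = (\<lambda>n. if n < length ws then ws ! n else 2)"

lemma admissible_seqs_digit_seqs: "c \<in> admissible_seqs \<Longrightarrow> c \<in> digit_seqs"
  by (simp add: admissible_seqs_def)

lemma shift_admissible_seqs: "c \<in> admissible_seqs \<Longrightarrow> shift m c \<in> admissible_seqs"
  by (simp add: admissible_seqs_def digit_seqs_def shift_def)

lemma const_2_admissible_seqs: "(\<lambda>_. 2) \<in> admissible_seqs"
  by (simp add: admissible_seqs_def digit_seqs_def admissible_pair_def)

lemma admissible_word_map_upt:
  assumes c: "c \<in> admissible_seqs" shows "admissible_word (map c [i..<i + n])"
proof (induction n arbitrary: i)
  case (Suc n)
  have ci: "c i \<in> {1..4}" "admissible_pair (c i) (c (Suc i))"
    using c by (auto simp: admissible_seqs_def digit_seqs_def)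
  have "[i..<i + Suc n] = i # [Suc i..<i + Suc n]" by (rule upt_conv_Cons) simp
  then have e: "map c [i..<i + Suc n] = c i # map c [Suc i..<Suc i + n]" by simp
  show ?case
  proof (cases n)
    case (Suc n')
    then have "[Suc i..<Suc i + n] = Suc i # [Suc (Suc i)..<Suc i + n]" by (intro upt_conv_Cons) simp
    then have "map c [Suc i..<Suc i + n] = c (Suc i) # map c [Suc (Suc i)..<Suc (Suc i) + n']"
      using Suc by simp
    then show ?thesis unfolding e using ci Suc.IH[of "Suc i"] by simp
  qed (use ci e in simp)
qed simp

lemma seq_prefix_admissible_words: "c \<in> admissible_seqs \<Longrightarrow> seq_prefix n c \<in> admissible_words n"
  using admissible_word_map_upt[of c 0 n] by (simp add: admissible_words_def seq_prefix_def)

lemma seq_prefix_eq_iff: "seq_prefix n c = seq_prefix n d \<longleftrightarrow> (\<forall>j<n. c j = d j)"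
  unfolding seq_prefix_def map_eq_conv by auto

lemma extend_word_admissible_seqs:
  assumes "admissible_word ws" shows "extend_word ws \<in> admissible_seqs"
proof -
  have "extend_word ws n \<in> {1..4}" for n
  proof (cases "n < length ws")
    case True
    then show ?thesis using admissible_word_set[OF assms] nth_mem by (fastforce simp: extend_word_def)
  qed (simp add: extend_word_def)
  moreover have "admissible_pair (extend_word ws n) (extend_word ws (Suc n))" for n
  proof (cases "Suc n < length ws")
    case True then show ?thesis using admissible_word_nth[OF assms True] by (simp add: extend_word_def)
  next
    case False then show ?thesis by (auto simp: extend_word_def admissible_pair_def)
  qed
  ultimately show ?thesis by (simp add: admissible_seqs_def digit_seqs_def)
qed

lemma open_fix_finite: "finite I \<Longrightarrow> open {f :: nat \<Rightarrow> nat. \<forall>i\<in>I. f i = w i}"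
  using product_topology_basis'[of I "\<lambda>i. {w i}" "\<lambda>i. i"] by (simp add: open_discrete)

lemma open_cylinder: "open (cylinder c n)"
proof -
  have "cylinder c n = {f. \<forall>i\<in>{..<n}. f i = c i}" by (auto simp: cylinder_def)
  then show ?thesis using open_fix_finite[of "{..<n}" c] by simp
qed

lemma compact_admissible_seqs: "compact admissible_seqs"
proof -
  have "compactin (product_topology (\<lambda>i. euclidean) UNIV) (PiE UNIV (\<lambda>_. {1..4::nat}))"
    by (simp add: compactin_PiE finite_imp_compact)
  moreover have "digit_seqs = PiE UNIV (\<lambda>_. {1..4::nat})"
    by (auto simp: digit_seqs_def PiE_def Pi_def)
  ultimately have "compact digit_seqs" by (metis euclidean_product_topology compactin_euclidean_iff)
  have "closed {c :: nat \<Rightarrow> nat. admissible_pair (c n) (c (Suc n))}" for n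
  proof -
    have "- {c :: nat \<Rightarrow> nat. admissible_pair (c n) (c (Suc n))}
       = {f. \<forall>i\<in>{n, Suc n}. f i = (\<lambda>i. if i = n then 2 else 4) i}
       \<union> {f. \<forall>i\<in>{n, Suc n}. f i = (\<lambda>i. if i = n then 3 else 1) i}"
      by (auto simp: admissible_pair_def)
    moreover have "open \<dots>" by (intro open_Un open_fix_finite) simp_all
    ultimately show ?thesis by (simp add: closed_def)
  qed
  then have closed: "closed (\<Inter>n. {c :: nat \<Rightarrow> nat. admissible_pair (c n) (c (Suc n))})"
    by (intro closed_INT) auto
  have "admissible_seqs = digit_seqs \<inter> (\<Inter>n. {c. admissible_pair (c n) (c (Suc n))})"
    by (auto simp: admissible_seqs_def)
  then show ?thesis using compact_Int_closed[OF \<open>compact digit_seqs\<close> closed] by simp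
qed

lemma admissible_words_cylinder_cover:
  assumes cover: "admissible_seqs \<subseteq> (\<Union>i\<in>F. cylinder (c i) (n i))" and N: "\<And>i. i \<in> F \<Longrightarrow> n i \<le> N"
  shows "admissible_words N \<subseteq> (\<Union>i\<in>F. {w \<in> admissible_words N. take (n i) w = seq_prefix (n i) (c i)})"
proof
  fix w assume w: "w \<in> admissible_words N"
  then have aw: "admissible_word w" "length w = N" by (simp_all add: admissible_words_def)
  obtain i where i: "i \<in> F" "extend_word w \<in> cylinder (c i) (n i)"
    using cover extend_word_admissible_seqs[OF aw(1)] by blast
  have "take (n i) w = seq_prefix (n i) (c i)"
  proof (rule nth_equalityI)
    show "length (take (n i) w) = length (seq_prefix (n i) (c i))"
      using aw N[OF i(1)] by (simp add: seq_prefix_def)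
    fix j assume j: "j < length (take (n i) w)"
    then have "extend_word w j = c i j" using i(2) by (simp add: cylinder_def)
    then show "take (n i) w ! j = seq_prefix (n i) (c i) ! j"
      using j by (simp add: extend_word_def seq_prefix_def)
  qed
  then show "w \<in> (\<Union>i\<in>F. {w \<in> admissible_words N. take (n i) w = seq_prefix (n i) (c i)})"
    using i(1) w by blast
qed

text \<open>Weighting a cylinder of length \<open>n\<close> by \<open>perron_root ^ (- n)\<close>, compare the number of
  admissible words of a length \<open>N\<close> beyond all \<open>n i\<close> with the number of their extensions.\<close>
lemma cylinder_cover_weight:
  assumes F: "finite F" and c: "\<And>i. i \<in> F \<Longrightarrow> c i \<in> admissible_seqs" and n: "\<And>i. i \<in> F \<Longrightarrow> 1 \<le> n i"
    and cover: "admissible_seqs \<subseteq> (\<Union>i\<in>F. cylinder (c i) (n i))"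
  shows "1 / (2 * perron_root) \<le> (\<Sum>i\<in>F. (1 / perron_root) ^ n i)"
proof -
  have "F \<noteq> {}" using cover const_2_admissible_seqs by blast
  define N where "N = Max (n ` F)"
  have nN: "n i \<le> N" if "i \<in> F" for i using F that by (simp add: N_def)
  have N: "1 \<le> N" using \<open>F \<noteq> {}\<close> nN n by (meson all_not_in_conv le_trans)
  define B where "B i = {w \<in> admissible_words N. take (n i) w = seq_prefix (n i) (c i)}" for i
  have "card (admissible_words N) \<le> card (\<Union>i\<in>F. B i)"
    using admissible_words_cylinder_cover[OF cover nN] F finite_admissible_words
    unfolding B_def by (intro card_mono) auto
  also have "\<dots> \<le> (\<Sum>i\<in>F. card (B i))" using F by (rule card_UN_le)
  finally have "real (card (admissible_words N)) \<le> (\<Sum>i\<in>F. real (card (B i)))"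
    by (metis of_nat_le_iff of_nat_sum)
  also have "\<dots> \<le> (\<Sum>i\<in>F. sqrt 2 * perron_root ^ N * (1 / perron_root) ^ n i)"
  proof (rule sum_mono)
    fix i assume i: "i \<in> F"
    have "real (card (B i)) \<le> sqrt 2 * perron_root ^ (N - n i)" unfolding B_def
      using n[OF i] nN[OF i] seq_prefix_admissible_words[OF c[OF i]]
      by (intro card_admissible_words_prefix_le) (simp_all add: admissible_words_def seq_prefix_def)
    also have "perron_root ^ (N - n i) = perron_root ^ N * (1 / perron_root) ^ n i"
      using nN[OF i] perron_root_gt_3 by (simp add: power_diff power_one_over)
    finally show "real (card (B i)) \<le> sqrt 2 * perron_root ^ N * (1 / perron_root) ^ n i" by simp
  qed
  also have "\<dots> = sqrt 2 * perron_root ^ N * (\<Sum>i\<in>F. (1 / perron_root) ^ n i)"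
    by (simp add: sum_distrib_left)
  finally have "perron_root ^ (N - 1) / sqrt 2 \<le> sqrt 2 * perron_root ^ N * (\<Sum>i\<in>F. (1 / perron_root) ^ n i)"
    using card_admissible_words_ge[of "N - 1"] N by simp
  moreover have "perron_root ^ N = perron_root * perron_root ^ (N - 1)"
    using N by (metis Suc_diff_le diff_Suc_1 power_Suc)
  moreover have "0 < perron_root ^ (N - 1)" using perron_root_gt_3 by simp
  moreover have sqrt2: "sqrt 2 * (sqrt 2 * x) = 2 * x" for x :: real
    by (simp add: mult.assoc[symmetric])
  ultimately show ?thesis using perron_root_gt_3 by (simp add: field_simps sqrt2)
qed

section \<open>Hausdorff dimension of \<open>U\<^sub>1\<close>\<close>

text \<open>Points coded by admissible sequences with first digit \<open>1, 2, 3, 4\<close> lie in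
  \<open>[0, \<lambda>]\<close>, \<open>[2\<lambda>, 2\<lambda> + 4\<lambda>\<^sup>2 - \<lambda>\<^sup>3]\<close>, \<open>[3\<lambda> + \<lambda>\<^sup>2, 4\<lambda> - \<lambda>\<^sup>2]\<close>, \<open>[1 - \<lambda>, 1]\<close>;
  the separation constant is the smallest of the three gaps.\<close>
definition sep_const :: "real \<Rightarrow> real" where
  "sep_const lam = min (min lam (lam - 3 * (lam * lam) + lam * (lam * lam))) (1 - 5 * lam + lam * lam)"

definition similarity_dim :: "real \<Rightarrow> real" where
  "similarity_dim lam = ln perron_root / - ln lam"

context small_ratio_ifs
begin

lemma sep_const_pos: "0 < sep_const lam"
proof -
  have "lam - 3 * (lam * lam) + lam * (lam * lam) = lam * (1 - 3 * lam + lam * lam)"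
    by (simp add: algebra_simps)
  moreover have "0 < 1 - 3 * lam + lam * lam" using quadratic_lam_pos lam_pos by linarith
  ultimately show ?thesis using lam_pos quadratic_lam_pos by (simp add: sep_const_def)
qed

lemma coding_point_cases_admissible:
  assumes c: "c \<in> admissible_seqs"
  shows "(c 0 = 1 \<and> 0 \<le> coding_point lam c \<and> coding_point lam c \<le> lam)
       \<or> (c 0 = 2 \<and> 2 * lam \<le> coding_point lam c \<and> coding_point lam c \<le> 2 * lam + 4 * (lam * lam) - lam * (lam * lam))
       \<or> (c 0 = 3 \<and> 3 * lam + lam * lam \<le> coding_point lam c \<and> coding_point lam c \<le> 4 * lam - lam * lam)
       \<or> (c 0 = 4 \<and> 1 - lam \<le> coding_point lam c \<and> coding_point lam c \<le> 1)"
proof -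
  have cS: "c \<in> digit_seqs" using c by (rule admissible_seqs_digit_seqs)
  have s1: "shift 1 c \<in> digit_seqs" by (rule shift_digit_seqs[OF cS])
  have ok: "admissible_pair (c 0) (c 1)" using c by (simp add: admissible_seqs_def)
  have unfold: "coding_point lam c = offset lam (c 0) + lam * coding_point lam (shift 1 c)"
    by (rule coding_point_unfold[OF cS])
  have tail: "(c 1 = 1 \<and> coding_point lam (shift 1 c) \<le> lam)
       \<or> (c 1 = 2 \<and> 2 * lam \<le> coding_point lam (shift 1 c) \<and> coding_point lam (shift 1 c) \<le> 3 * lam)
       \<or> (c 1 = 3 \<and> 3 * lam - lam * lam \<le> coding_point lam (shift 1 c)
            \<and> coding_point lam (shift 1 c) \<le> 4 * lam - lam * lam)
       \<or> (c 1 = 4 \<and> 1 - lam \<le> coding_point lam (shift 1 c))"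
    using coding_point_cases[OF s1] by (simp add: shift_def)
  have two: "coding_point lam c \<le> 2 * lam + 4 * (lam * lam) - lam * (lam * lam)" if "c 0 = 2"
  proof -
    have "c 1 \<noteq> 4" using ok that by (simp add: admissible_pair_def)
    then have "coding_point lam (shift 1 c) \<le> 4 * lam - lam * lam"
      using tail lam_square_bounds lam_less_21_100 by (elim disjE conjE; linarith)
    then have "lam * coding_point lam (shift 1 c) \<le> lam * (4 * lam - lam * lam)"
      using lam_pos by (intro mult_left_mono) simp_all
    then show ?thesis using unfold that offset_values_mult by (simp add: algebra_simps)
  qed
  have three: "3 * lam + lam * lam \<le> coding_point lam c" if "c 0 = 3"
  proof -
    have "c 1 \<noteq> 1" using ok that by (simp add: admissible_pair_def)
    then have "2 * lam \<le> coding_point lam (shift 1 c)"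
      using tail lam_square_bounds lam_less_21_100 by (elim disjE conjE; linarith)
    then have "lam * (2 * lam) \<le> lam * coding_point lam (shift 1 c)"
      using lam_pos by (intro mult_left_mono) simp_all
    then show ?thesis using unfold that offset_values_mult by (simp add: algebra_simps)
  qed
  show ?thesis
    using coding_point_cases[OF cS] two three coding_point_nonneg[OF cS] coding_point_le_1[OF cS]
    by auto
qed

lemma separation_first_digit:
  assumes c: "c \<in> admissible_seqs" and d: "d \<in> admissible_seqs" and ne: "c 0 \<noteq> d 0"
  shows "sep_const lam \<le> \<bar>coding_point lam c - coding_point lam d\<bar>"
proof -
  have "sep_const lam \<le> coding_point lam c - coding_point lam d
      \<or> sep_const lam \<le> coding_point lam d - coding_point lam c"
    using coding_point_cases_admissible[OF c] coding_point_cases_admissible[OF d] ne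
      sep_const_pos lam_square_bounds lam_less_21_100 lam_pos
    unfolding sep_const_def by (elim disjE conjE; linarith)
  then show ?thesis by linarith
qed

lemma separation:
  assumes c: "c \<in> admissible_seqs" and d: "d \<in> admissible_seqs"
    and eq: "\<forall>j<m. c j = d j" and ne: "c m \<noteq> d m"
  shows "sep_const lam * lam ^ m \<le> \<bar>coding_point lam c - coding_point lam d\<bar>"
proof -
  have "sep_const lam \<le> \<bar>coding_point lam (shift m c) - coding_point lam (shift m d)\<bar>"
    using separation_first_digit[OF shift_admissible_seqs[OF c] shift_admissible_seqs[OF d]] ne
    by (simp add: shift_def)
  then have "lam ^ m * sep_const lam \<le> lam ^ m * \<bar>coding_point lam (shift m c) - coding_point lam (shift m d)\<bar>"
    using lam_pos by (intro mult_left_mono) simp_all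
  also have "\<dots> = \<bar>coding_point lam c - coding_point lam d\<bar>"
    using coding_point_eq_prefix[OF admissible_seqs_digit_seqs[OF c] admissible_seqs_digit_seqs[OF d] eq] lam_pos
    by (simp add: abs_mult)
  finally show ?thesis by (simp add: mult.commute)
qed

lemma small_set_in_cylinder:
  assumes b: "bounded U" and c: "c \<in> admissible_seqs" "coding_point lam c \<in> U" and n: "1 \<le> n"
    and diam: "diameter U < sep_const lam * lam ^ (n - 1)"
    and d: "d \<in> admissible_seqs" "coding_point lam d \<in> U"
  shows "d \<in> cylinder c n"
proof (rule ccontr)
  assume "d \<notin> cylinder c n"
  then have ex: "\<exists>j. j < n \<and> d j \<noteq> c j" by (auto simp: cylinder_def)
  define m where "m = (LEAST j. j < n \<and> d j \<noteq> c j)"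
  have m: "m < n" "d m \<noteq> c m" using LeastI_ex[OF ex] by (simp_all add: m_def)
  have eq: "\<forall>j<m. d j = c j" using not_less_Least m(1) unfolding m_def by force
  have "sep_const lam * lam ^ m \<le> \<bar>coding_point lam d - coding_point lam c\<bar>"
    by (rule separation[OF d(1) c(1) eq m(2)])
  also have "\<dots> \<le> diameter U"
    using diameter_bounded_bound[OF b d(2) c(2)] by (simp add: dist_real_def)
  also have "\<dots> < sep_const lam * lam ^ (n - 1)" by (rule diam)
  also have "\<dots> \<le> sep_const lam * lam ^ m"
    using sep_const_pos lam_pos lam_less_1 m(1) by (intro mult_left_mono power_decreasing) simp_all
  finally show False by simp
qed

lemma similarity_dim_pos: "0 < similarity_dim lam"
  using perron_root_gt_3 lam_pos lam_less_1 by (simp add: similarity_dim_def divide_pos_neg)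

lemma lam_powr_similarity_dim: "lam powr similarity_dim lam = 1 / perron_root"
proof -
  have "similarity_dim lam * ln lam = - ln perron_root"
    using lam_pos lam_less_1 by (simp add: similarity_dim_def field_simps)
  then show ?thesis
    using lam_pos perron_root_gt_3 by (simp add: powr_def mult.commute exp_minus inverse_eq_divide)
qed

lemma lam_powr_ge: "s \<le> similarity_dim lam \<Longrightarrow> 1 / perron_root \<le> lam powr s"
  using powr_mono'[of s "similarity_dim lam" lam] lam_pos lam_less_1 lam_powr_similarity_dim by simp

lemma lam_powr_less: "similarity_dim lam < s \<Longrightarrow> lam powr s < 1 / perron_root"
  using powr_less_mono'[of lam "similarity_dim lam" s] lam_pos lam_less_1 lam_powr_similarity_dim by simp

text \<open>Cover by the images of the admissible cylinders of length \<open>n\<close>.\<close>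
lemma hausdorff_pre_coding_image_le:
  assumes s: "0 < s" and \<delta>: "lam ^ n \<le> \<delta>"
  shows "hausdorff_pre s \<delta> (coding_point lam ` admissible_seqs)
           \<le> ennreal (card (admissible_words n) * (lam powr s) ^ n)"
proof -
  define piece where "piece w = coding_point lam ` {c \<in> admissible_seqs. seq_prefix n c = w}" for w
  let ?F = "piece ` admissible_words n"
  have bounded: "bounded (piece w)" for w
    by (rule bounded_subset[of "{0..1}"])
       (use coding_point_nonneg coding_point_le_1 admissible_seqs_digit_seqs in \<open>auto simp: piece_def\<close>)
  have diam: "diameter (piece w) \<le> lam ^ n" for w
  proof (rule diameter_le)
    fix x y assume "x \<in> piece w" "y \<in> piece w"
    then obtain c d where "c \<in> admissible_seqs" "d \<in> admissible_seqs" "seq_prefix n c = seq_prefix n d"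
      "x = coding_point lam c" "y = coding_point lam d"
      by (auto simp: piece_def)
    then show "norm (x - y) \<le> lam ^ n"
      using coding_point_diff_le admissible_seqs_digit_seqs by (simp add: seq_prefix_eq_iff)
  qed (use lam_pos in simp)
  have pre: "hausdorff_pre s \<delta> (coding_point lam ` admissible_seqs) \<le> ennreal (\<Sum>V\<in>?F. hcontrib s V)"
  proof (rule hausdorff_pre_le_finite_cover)
    show "coding_point lam ` admissible_seqs \<subseteq> \<Union>?F"
      using seq_prefix_admissible_words by (auto simp: piece_def)
    show "bounded V \<and> diameter V \<le> \<delta>" if "V \<in> ?F" for V
      using that bounded diam \<delta> by (force intro: order_trans)
    show "0 \<le> \<delta>" using \<delta> lam_pos zero_le_power[of lam n] by linarith
  qed (simp add: finite_admissible_words)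
  have "hcontrib s V \<le> (lam powr s) ^ n" if "V \<in> ?F" for V
  proof -
    obtain w where "V = piece w" using \<open>V \<in> ?F\<close> by blast
    then have "V = {} \<or> hcontrib s V = diameter V powr s"
      using s by (simp add: hcontrib_def)
    moreover have "diameter V powr s \<le> (lam ^ n) powr s"
      using \<open>V = piece w\<close> diam[of w] diameter_ge_0[OF bounded[of w]] s by (simp add: powr_mono2)
    ultimately show ?thesis
      using lam_pos by (auto simp: hcontrib_def powr_power_real)
  qed
  then have "(\<Sum>V\<in>?F. hcontrib s V) \<le> card ?F * (lam powr s) ^ n"
    using sum_bounded_above[of ?F "hcontrib s"] by simp
  also have "\<dots> \<le> card (admissible_words n) * (lam powr s) ^ n"
    using card_image_le[OF finite_admissible_words] by (intro mult_right_mono) simp_all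
  finally show ?thesis using pre ennreal_leI order_trans by blast
qed

lemma hausdorff_measure_coding_image_zero:
  assumes s: "similarity_dim lam < s"
  shows "hausdorff_measure s (coding_point lam ` admissible_seqs) = 0"
  unfolding hausdorff_measure_eq_0_iff
proof (intro allI impI)
  fix \<delta> :: real assume "0 < \<delta>"
  have s_pos: "0 < s" using s similarity_dim_pos by linarith
  define q where "q = perron_root * lam powr s"
  have "1 / perron_root < 1" using perron_root_gt_3 by simp
  then have lps: "0 < lam powr s" "lam powr s \<le> 1"
    using lam_pos lam_powr_less[OF s] by simp_all
  have q: "0 < q" "q < 1"
    using lam_pos lam_powr_less[OF s] perron_root_gt_3 by (simp_all add: q_def field_simps)
  have "hausdorff_pre s \<delta> (coding_point lam ` admissible_seqs) \<le> 0 + ennreal e" if e: "0 < e" for e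
  proof -
    obtain n1 where n1: "q ^ n1 < e / (4 * sqrt 2)"
      using real_arch_pow_inv[of "e / (4 * sqrt 2)" q] e q by auto
    obtain n2 where n2: "lam ^ n2 < \<delta>"
      using real_arch_pow_inv[of \<delta> lam] \<open>0 < \<delta>\<close> lam_less_1 by auto
    define m where "m = n1 + n2"
    have "lam ^ Suc m \<le> \<delta>"
      using n2 lam_pos lam_less_1 power_decreasing[of n2 "Suc m" lam] by (simp add: m_def)
    then have pre: "hausdorff_pre s \<delta> (coding_point lam ` admissible_seqs)
        \<le> ennreal (card (admissible_words (Suc m)) * (lam powr s) ^ Suc m)"
      by (rule hausdorff_pre_coding_image_le[OF s_pos])
    have "card (admissible_words (Suc m)) * (lam powr s) ^ Suc m
        \<le> 4 * sqrt 2 * perron_root ^ m * (lam powr s) ^ m"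
      using card_admissible_words_le[of m] lps perron_root_gt_3 power_decreasing[of m "Suc m" "lam powr s"]
      by (intro mult_mono) simp_all
    also have "\<dots> = 4 * sqrt 2 * q ^ m" by (simp add: q_def power_mult_distrib)
    also have "\<dots> \<le> 4 * sqrt 2 * q ^ n1"
      using q by (intro mult_left_mono power_decreasing) (simp_all add: m_def)
    also have "\<dots> < e" using n1 by (simp add: field_simps)
    finally show ?thesis using pre ennreal_leI[of _ e] by (simp add: order_trans)
  qed
  then show "hausdorff_pre s \<delta> (coding_point lam ` admissible_seqs) = 0"
    using ennreal_le_epsilon by (metis add_0 le_zero_eq)
qed

lemma exists_scale_level:
  assumes "0 < D" "D < sep_const lam"
  obtains n where "1 \<le> n" "D < sep_const lam * lam ^ (n - 1)" "sep_const lam * lam ^ n \<le> D"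
proof -
  have g: "0 < sep_const lam" by (rule sep_const_pos)
  obtain m where "lam ^ m < D / sep_const lam"
    using real_arch_pow_inv[of "D / sep_const lam" lam] assms g lam_less_1 by auto
  then have Pm: "sep_const lam * lam ^ m \<le> D" using g by (simp add: field_simps)
  define n where "n = (LEAST n. sep_const lam * lam ^ n \<le> D)"
  have Pn: "sep_const lam * lam ^ n \<le> D" unfolding n_def by (rule LeastI[of _ m]) (rule Pm)
  have "n \<noteq> 0" using Pn assms by (intro notI) simp
  moreover have "\<not> sep_const lam * lam ^ (n - 1) \<le> D"
    using Least_le[of "\<lambda>n. sep_const lam * lam ^ n \<le> D" "n - 1"] \<open>n \<noteq> 0\<close> unfolding n_def[symmetric]
    by (metis diff_less less_le_not_le zero_less_iff_neq_zero zero_less_one)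
  ultimately show ?thesis using Pn by (intro that[of n]) (simp_all add: not_le)
qed

lemma perron_weight_le_diameter:
  assumes s: "0 < s" "s \<le> similarity_dim lam" and D: "sep_const lam * lam ^ n \<le> D"
  shows "sep_const lam powr s * (1 / perron_root) ^ n \<le> D powr s"
proof -
  have "sep_const lam powr s * (1 / perron_root) ^ n \<le> sep_const lam powr s * (lam powr s) ^ n"
    using lam_powr_ge[OF s(2)] perron_root_gt_3 by (intro mult_left_mono power_mono) simp_all
  also have "\<dots> = (sep_const lam * lam ^ n) powr s"
    using sep_const_pos lam_pos by (simp add: powr_mult powr_power_real)
  also have "\<dots> \<le> D powr s" using D sep_const_pos lam_pos s by (intro powr_mono2) simp_all
  finally show ?thesis .
qed

text \<open>The slack \<open>e\<close> is needed for sets of diameter \<open>0\<close>, whose contribution vanishes.\<close>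
lemma cylinder_for_small_set:
  assumes s: "0 < s" "s \<le> similarity_dim lam" and b: "bounded U"
    and diam: "diameter U \<le> sep_const lam / 2" and e: "0 < e"
  obtains c n where "c \<in> admissible_seqs" "1 \<le> n"
    "\<And>d. d \<in> admissible_seqs \<Longrightarrow> coding_point lam d \<in> U \<Longrightarrow> d \<in> cylinder c n"
    "(1 / perron_root) ^ n \<le> hcontrib s U / sep_const lam powr s + e"
proof -
  have g: "0 < sep_const lam" by (rule sep_const_pos)
  have G: "0 < sep_const lam powr s" using g by simp
  have h: "0 \<le> hcontrib s U / sep_const lam powr s" using G hcontrib_nonneg by simp
  obtain N0 where "(1 / perron_root) ^ N0 < e"
    using real_arch_pow_inv[of e "1 / perron_root"] e perron_root_gt_3 by auto
  then have N: "(1 / perron_root) ^ Suc N0 \<le> hcontrib s U / sep_const lam powr s + e"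
    using h perron_root_gt_3 power_decreasing[of N0 "Suc N0" "1 / perron_root"] by simp
  show ?thesis
  proof (cases "\<exists>c\<in>admissible_seqs. coding_point lam c \<in> U")
    case False
    show ?thesis by (rule that[OF const_2_admissible_seqs _ _ N]) (use False in auto)
  next
    case True
    then obtain c where c: "c \<in> admissible_seqs" "coding_point lam c \<in> U" by blast
    show ?thesis
    proof (cases "diameter U = 0")
      case True
      then have "diameter U < sep_const lam * lam ^ (Suc N0 - 1)" using g lam_pos by simp
      then show ?thesis using that[OF c(1) _ _ N] small_set_in_cylinder[OF b c] by simp
    next
      case False
      then have "0 < diameter U" using diameter_ge_0[OF b] by simp
      moreover have "diameter U < sep_const lam" using diam g by simp
      ultimately obtain n where n: "1 \<le> n" "diameter U < sep_const lam * lam ^ (n - 1)"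
          "sep_const lam * lam ^ n \<le> diameter U"
        by (rule exists_scale_level)
      have "sep_const lam powr s * (1 / perron_root) ^ n \<le> diameter U powr s"
        using perron_weight_le_diameter[OF s n(3)] .
      also have "\<dots> = hcontrib s U" using s c by (auto simp: hcontrib_def)
      finally have "(1 / perron_root) ^ n \<le> hcontrib s U / sep_const lam powr s + e"
        using G e by (simp add: field_simps) (use mult_pos_pos[OF e G] in linarith)
      then show ?thesis using that[OF c(1) n(1)] small_set_in_cylinder[OF b c n(1,2)] by blast
    qed
  qed
qed

lemma hausdorff_pre_coding_image_ge:
  assumes s: "0 < s" "s \<le> similarity_dim lam"
  shows "ennreal (sep_const lam powr s / (4 * perron_root))
           \<le> hausdorff_pre s (sep_const lam / 2) (coding_point lam ` admissible_seqs)"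
  unfolding hausdorff_pre_def
proof (rule INF_greatest)
  fix U :: "nat \<Rightarrow> real set"
  assume "U \<in> {U. coding_point lam ` admissible_seqs \<subseteq> (\<Union>i. U i)
                  \<and> (\<forall>i. bounded (U i) \<and> diameter (U i) \<le> sep_const lam / 2)}"
  then have cov: "coding_point lam ` admissible_seqs \<subseteq> (\<Union>i. U i)"
    and bd: "\<And>i. bounded (U i)" "\<And>i. diameter (U i) \<le> sep_const lam / 2" by blast+
  define G where "G = sep_const lam powr s"
  have G: "0 < G" using sep_const_pos by (simp add: G_def)
  define e where "e i = 1 / (4 * perron_root) / 2 ^ Suc i" for i :: nat
  have e: "\<And>i. 0 < e i" "e sums (1 / (4 * perron_root))"
    using perron_root_gt_3 by (simp add: e_def) (unfold e_def, rule geometric_halves_sums)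
  have "\<exists>c n. c \<in> admissible_seqs \<and> 1 \<le> n
      \<and> (\<forall>d\<in>admissible_seqs. coding_point lam d \<in> U i \<longrightarrow> d \<in> cylinder c n)
      \<and> (1 / perron_root) ^ n \<le> hcontrib s (U i) / G + e i" for i
    using cylinder_for_small_set[OF s bd(1) bd(2) e(1)] unfolding G_def by metis
  then obtain c n where c: "\<And>i. c i \<in> admissible_seqs" "\<And>i. 1 \<le> n i"
      "\<And>i d. d \<in> admissible_seqs \<Longrightarrow> coding_point lam d \<in> U i \<Longrightarrow> d \<in> cylinder (c i) (n i)"
      and weight: "\<And>i. (1 / perron_root) ^ n i \<le> hcontrib s (U i) / G + e i"
    by metis
  have "admissible_seqs \<subseteq> (\<Union>i. cylinder (c i) (n i))" using cov c(3) by blast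
  then obtain F where F: "finite F" "admissible_seqs \<subseteq> (\<Union>i\<in>F. cylinder (c i) (n i))"
    using compactE_image[OF compact_admissible_seqs open_cylinder] by metis
  have "1 / (2 * perron_root) \<le> (\<Sum>i\<in>F. (1 / perron_root) ^ n i)"
    using cylinder_cover_weight[OF F(1) c(1,2) F(2)] .
  also have "\<dots> \<le> (\<Sum>i\<in>F. hcontrib s (U i) / G + e i)" by (intro sum_mono weight)
  also have "\<dots> \<le> (\<Sum>i\<in>F. hcontrib s (U i)) / G + 1 / (4 * perron_root)"
    using sum_le_suminf[OF sums_summable[OF e(2)] F(1)] e sums_unique[OF e(2)]
    by (simp add: sum.distrib sum_divide_distrib less_imp_le)
  finally have "G / (4 * perron_root) \<le> (\<Sum>i\<in>F. hcontrib s (U i))"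
    using G perron_root_gt_3 by (simp add: field_simps)
  then have "ennreal (G / (4 * perron_root)) \<le> (\<Sum>i\<in>F. ennreal (hcontrib s (U i)))"
    by (simp add: hcontrib_nonneg sum_ennreal ennreal_leI)
  also have "\<dots> \<le> (\<Sum>i. ennreal (hcontrib s (U i)))"
    by (rule sum_le_suminf[OF summableI F(1)]) simp
  finally show "ennreal (sep_const lam powr s / (4 * perron_root)) \<le> (\<Sum>i. ennreal (hcontrib s (U i)))"
    by (simp add: G_def)
qed

lemma hausdorff_measure_coding_image_pos:
  assumes "0 \<le> s" "s \<le> similarity_dim lam"
  shows "hausdorff_measure s (coding_point lam ` admissible_seqs) \<noteq> 0"
proof (cases "s = 0")
  case True
  have "1 \<le> hausdorff_pre 0 1 (coding_point lam ` admissible_seqs)"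
    using const_2_admissible_seqs by (intro hausdorff_pre_0_ge_1) blast
  also have "\<dots> \<le> hausdorff_measure 0 (coding_point lam ` admissible_seqs)"
    by (rule hausdorff_pre_le_measure) simp
  finally show ?thesis using True by auto
next
  case False
  then have "0 < s" using assms by simp
  have "ennreal (sep_const lam powr s / (4 * perron_root))
      \<le> hausdorff_pre s (sep_const lam / 2) (coding_point lam ` admissible_seqs)"
    using hausdorff_pre_coding_image_ge[OF \<open>0 < s\<close> assms(2)] .
  also have "\<dots> \<le> hausdorff_measure s (coding_point lam ` admissible_seqs)"
    using sep_const_pos by (intro hausdorff_pre_le_measure) simp
  moreover have "0 < sep_const lam powr s / (4 * perron_root)"
    using sep_const_pos perron_root_gt_3 by simp
  ultimately show ?thesis by (auto simp: ennreal_eq_0_iff)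
qed

end

section \<open>Points with \<open>2 ^ k\<close> codings\<close>

definition prepend_24 :: "nat \<Rightarrow> (nat \<Rightarrow> nat) \<Rightarrow> nat \<Rightarrow> nat" where
  "prepend_24 k d = (\<lambda>n. if n < 2 * k then (if even n then 2 else 4) else d (n - 2 * k))"

definition word_map :: "real \<Rightarrow> nat list \<Rightarrow> real \<Rightarrow> real" where
  "word_map lam ws y = (\<Sum>j<length ws. lam ^ j * offset lam (ws ! j)) + lam ^ length ws * y"

lemma prepend_24_digit_seqs: "d \<in> admissible_seqs \<Longrightarrow> prepend_24 k d \<in> digit_seqs"
  by (auto simp: prepend_24_def digit_seqs_def admissible_seqs_def)

lemma shift_prepend_24: "shift (2 * k) (prepend_24 k d) = d"
  by (simp add: fun_eq_iff shift_def prepend_24_def)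

lemma avoids_31_prepend_24:
  assumes d: "d \<in> admissible_seqs" shows "avoids_31 (prepend_24 k d)"
  unfolding avoids_31_def
proof (intro allI notI)
  fix n assume a: "prepend_24 k d n = 3 \<and> prepend_24 k d (Suc n) = 1"
  then have "\<not> n < 2 * k" by (auto simp: prepend_24_def split: if_splits)
  then have "d (n - 2 * k) = 3" "d (Suc (n - 2 * k)) = 1" using a by (simp_all add: prepend_24_def Suc_diff_le)
  moreover have "admissible_pair (d (n - 2 * k)) (d (Suc (n - 2 * k)))" using d by (simp add: admissible_seqs_def)
  ultimately show False by (simp add: admissible_pair_def)
qed

lemma positions_24_prepend_24:
  assumes d: "d \<in> admissible_seqs" shows "positions_24 (prepend_24 k d) = (\<lambda>i. 2 * i) ` {..<k}"
proof
  show "positions_24 (prepend_24 k d) \<subseteq> (\<lambda>i. 2 * i) ` {..<k}"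
  proof
    fix n assume "n \<in> positions_24 (prepend_24 k d)"
    then have a: "prepend_24 k d n = 2" "prepend_24 k d (Suc n) = 4" by (simp_all add: positions_24_def)
    show "n \<in> (\<lambda>i. 2 * i) ` {..<k}"
    proof (cases "n < 2 * k")
      case True
      then have "even n" using a by (auto simp: prepend_24_def split: if_splits)
      then show ?thesis using True by auto
    next
      case False
      then have "d (n - 2 * k) = 2" "d (Suc (n - 2 * k)) = 4" using a by (simp_all add: prepend_24_def Suc_diff_le)
      moreover have "admissible_pair (d (n - 2 * k)) (d (Suc (n - 2 * k)))" using d by (simp add: admissible_seqs_def)
      ultimately show ?thesis by (simp add: admissible_pair_def)
    qed
  qed
  show "(\<lambda>i. 2 * i) ` {..<k} \<subseteq> positions_24 (prepend_24 k d)"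
    by (auto simp: positions_24_def prepend_24_def)
qed

lemma card_positions_24_prepend_24:
  "d \<in> admissible_seqs \<Longrightarrow> card (positions_24 (prepend_24 k d)) = k"
  using positions_24_prepend_24[of d k] by (simp add: card_image inj_on_def)

context small_ratio_ifs
begin

lemma coding_point_prepend_24:
  assumes d: "d \<in> admissible_seqs"
  shows "coding_point lam (prepend_24 k d)
           = (\<Sum>j<2 * k. lam ^ j * offset lam (if even j then 2 else 4)) + lam ^ (2 * k) * coding_point lam d"
proof -
  have "(\<Sum>j<2 * k. lam ^ j * offset lam (prepend_24 k d j))
      = (\<Sum>j<2 * k. lam ^ j * offset lam (if even j then 2 else 4))"
    by (intro sum.cong) (simp_all add: prepend_24_def)
  then show ?thesis
    using coding_point_shift[OF prepend_24_digit_seqs[OF d, of k], of "2 * k"] by (simp add: shift_prepend_24)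
qed

lemma affine_copy_in_Ufin:
  obtains b r where "0 < r" "(\<lambda>y. b + r * y) ` coding_point lam ` admissible_seqs \<subseteq> Ufin lam (2 ^ k)"
proof
  show "0 < lam ^ (2 * k)" using lam_pos by simp
  show "(\<lambda>y. (\<Sum>j<2 * k. lam ^ j * offset lam (if even j then 2 else 4)) + lam ^ (2 * k) * y)
      ` coding_point lam ` admissible_seqs \<subseteq> Ufin lam (2 ^ k)"
  proof
    fix x assume "x \<in> (\<lambda>y. (\<Sum>j<2 * k. lam ^ j * offset lam (if even j then 2 else 4)) + lam ^ (2 * k) * y)
        ` coding_point lam ` admissible_seqs"
    then obtain d where d: "d \<in> admissible_seqs" and x: "x = coding_point lam (prepend_24 k d)"
      using coding_point_prepend_24 by auto
    have "finite (positions_24 (prepend_24 k d))" using positions_24_prepend_24[OF d] by simp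
    then have "\<exists>u. x = coding_point lam u \<and> u \<in> digit_seqs \<and> avoids_31 u
        \<and> finite (positions_24 u) \<and> (2::nat) ^ k = 2 ^ card (positions_24 u)"
      using prepend_24_digit_seqs[OF d] avoids_31_prepend_24[OF d] card_positions_24_prepend_24[OF d] x
      by (intro exI[of _ "prepend_24 k d"]) simp
    then show "x \<in> Ufin lam (2 ^ k)" by (simp add: Ufin_eq)
  qed
qed

text \<open>A normal form with finitely many \<open>24\<close>-blocks is admissible after its last one.\<close>
lemma Ufin_subset_word_maps: "Ufin lam i \<subseteq> (\<Union>ws. word_map lam ws ` coding_point lam ` admissible_seqs)"
proof
  fix x assume "x \<in> Ufin lam i"
  then obtain u where u: "u \<in> digit_seqs" "avoids_31 u" "finite (positions_24 u)" and x: "x = coding_point lam u"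
    unfolding Ufin_eq by blast
  obtain m where m: "\<forall>n\<in>positions_24 u. n < m" using u(3) finite_nat_set_iff_bounded by blast
  have "admissible_pair (u (n + m)) (u (Suc n + m))" for n
  proof -
    have "n + m \<notin> positions_24 u" using m by fastforce
    then show ?thesis using u(2) by (simp add: positions_24_def avoids_31_def admissible_pair_def)
  qed
  then have "shift m u \<in> admissible_seqs"
    using shift_digit_seqs[OF u(1)] by (simp add: admissible_seqs_def shift_def)
  moreover have "x = word_map lam (seq_prefix m u) (coding_point lam (shift m u))"
    using coding_point_shift[OF u(1), of m] x by (simp add: word_map_def seq_prefix_def)
  ultimately show "x \<in> (\<Union>ws. word_map lam ws ` coding_point lam ` admissible_seqs)" by blast
qed

lemma Ufin_1_eq: "Ufin lam 1 = coding_point lam ` admissible_seqs"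
proof -
  have adm: "u \<in> admissible_seqs \<longleftrightarrow> u \<in> digit_seqs \<and> avoids_31 u \<and> positions_24 u = {}" for u
    by (auto simp: admissible_seqs_def avoids_31_def admissible_pair_def positions_24_def)
  have "finite P \<and> 1 = (2::nat) ^ card P \<longleftrightarrow> P = {}" for P :: "nat set"
  proof (cases "finite P \<and> P \<noteq> {}")
    case True
    then have "0 < card P" by (simp add: card_gt_0_iff)
    then have "1 < (2::nat) ^ card P" using one_less_power[of "2::nat" "card P"] by simp
    then show ?thesis using True by simp
  qed auto
  then have "u \<in> digit_seqs \<and> avoids_31 u \<and> finite (positions_24 u) \<and> 1 = (2::nat) ^ card (positions_24 u)
      \<longleftrightarrow> u \<in> admissible_seqs" for u
    using adm by simp
  then show ?thesis unfolding Ufin_eq by (simp add: Setcompr_eq_image)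
qed

lemma hausdorff_measure_Ufin_zero:
  assumes "similarity_dim lam < s" shows "hausdorff_measure s (Ufin lam i) = 0"
proof -
  have "hausdorff_measure s (word_map lam ws ` coding_point lam ` admissible_seqs) = 0" for ws
  proof (rule hausdorff_measure_lipschitz_image_zero)
    show "\<bar>word_map lam ws x - word_map lam ws y\<bar> \<le> lam ^ length ws * \<bar>x - y\<bar>" for x y
      using lam_pos by (simp add: word_map_def abs_mult right_diff_distrib[symmetric])
  qed (use lam_pos assms similarity_dim_pos hausdorff_measure_coding_image_zero in auto)
  then have "hausdorff_measure s (\<Union>ws. word_map lam ws ` coding_point lam ` admissible_seqs) = 0"
    by (intro hausdorff_measure_countable_UN_zero) simp_all
  then show ?thesis
    using hausdorff_measure_mono[OF Ufin_subset_word_maps, of s i] by simp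
qed

lemma hausdorff_dim_Ufin_1: "hausdorff_dim (Ufin lam 1) = similarity_dim lam"
  unfolding Ufin_1_eq
  using less_imp_le[OF similarity_dim_pos] hausdorff_measure_coding_image_zero hausdorff_measure_coding_image_pos
  by (rule hausdorff_dim_eqI)

lemma hausdorff_dim_Ufin_pow2: "hausdorff_dim (Ufin lam (2 ^ k)) = similarity_dim lam"
proof (rule hausdorff_dim_eqI)
  fix s assume s: "0 \<le> s" "s \<le> similarity_dim lam"
  obtain b r where r: "0 < r" and copy: "(\<lambda>y. b + r * y) ` coding_point lam ` admissible_seqs \<subseteq> Ufin lam (2 ^ k)"
    by (rule affine_copy_in_Ufin)
  have "hausdorff_measure s ((\<lambda>y. b + r * y) ` coding_point lam ` admissible_seqs) \<noteq> 0"
    using hausdorff_measure_affine_image_nonzero[OF r s(1) hausdorff_measure_coding_image_pos[OF s]] .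
  then show "hausdorff_measure s (Ufin lam (2 ^ k)) \<noteq> 0"
    using hausdorff_measure_mono[OF copy, of s] by auto
next
  show "0 \<le> similarity_dim lam" using similarity_dim_pos by simp
  show "hausdorff_measure s (Ufin lam (2 ^ k)) = 0" if "similarity_dim lam < s" for s
    using hausdorff_measure_Ufin_zero[OF that] .
qed

end

theorem theorem2p23:
  fixes lam :: real
  assumes "0 < lam" and "lam < (5 - sqrt 21) / 2"
  shows "(\<forall>k::nat. k \<ge> 1 \<longrightarrow> hausdorff_dim (Ufin lam (2 ^ k)) = hausdorff_dim (Ufin lam 1))
       \<and> hausdorff_dim (Ufin lam 1) = ln (2 + sqrt 2) / (- ln lam)
       \<and> (\<forall>i::nat. 0 < i \<longrightarrow> \<not> (\<exists>k::nat. i = 2 ^ k) \<longrightarrow> Ufin lam i = {})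
       \<and> Ualeph0 lam = {}"
proof -
  interpret small_ratio_ifs lam
    using assms small_ratio_less by unfold_locales linarith+
  have "similarity_dim lam = ln (2 + sqrt 2) / - ln lam"
    by (simp add: similarity_dim_def perron_root_def)
  then show ?thesis
    using hausdorff_dim_Ufin_pow2 hausdorff_dim_Ufin_1 Ufin_empty Ualeph0_empty by simp
qed

end
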